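(* Let $\mathbf A$ be a pseudo-Kleene lattice. Then $\mathbf A$ is super-paraorthomodular if and only if $\mathbf A$ has no subalgebra isomorphic to $\mathbf B_6$, no subalgebra isomorphic to $\mathbf B_8$, and no subalgebra $\mathbf B$ admitting a congruence $\theta$ such that $\mathbf B/\theta\cong\mathbf B_8^*$ or $\mathbf B/\theta\cong\mathbf B_{10}$.
   Context: A pseudo-Kleene lattice is an algebra $(A,\land,\lor,{}',0,1)$ that is a bounded lattice with an antitone involution ${}'$ ($x\leq y\Rightarrow y'\leq x'$, $x''=x$) satisfying $x\land x'\leq y\lor y'$; subalgebras and congruences are with respect to $\land,\lor,{}',0,1$. It is super-paraorthomodular if for all $x,y$: (SP1) $x\leq y$ and $x'\land y=(x\land x')\lor(y\land y')$ imply $y\land(x\lor x')=x\lor(y\land y')$; (SP2) $x\leq y$ implies $(x\land x')\lor(y\land y')=(x'\land y)\land(x'\land y)'$. In all the following finite pseudo-Kleene lattices the involution maps $u\leftrightarrow u'$ and $0\leftrightarrow 1$, and the order is given by covering relations. $\mathbf B_6$: elements $0,x,y,y',x',1$ with $0\prec x\prec y\prec 1$ and $0\prec y'\prec x'\prec 1$. $\mathbf B_8$: elements $0,z',x,y,y',x',z,1$ with $0\prec z'$, $z'\prec x\prec y\prec z$, $z'\prec y'\prec x'\prec z$, $z\prec 1$. $\mathbf B_8^*$: elements $0,x,y,z,z',y',x',1$ with $0\prec x$, $0\prec y$, $x\prec z$, $y\prec z'$, $z\prec z'$, $z\prec y'$, $z'\prec x'$, $y'\prec 1$, $x'\prec 1$.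 $\mathbf B_{10}$: elements $0,x,y',m,a,a',x',y,m',1$ with $0\prec y'$, $0\prec m$, $0\prec x$, $y'\prec a'$, $m\prec a'$, $m\prec a$, $x\prec a$, $a'\prec x'$, $a'\prec m'$, $a\prec m'$, $a\prec y$, $x'\prec 1$, $m'\prec 1$, $y\prec 1$. *)

theory Defs
  imports Main
begin

record 'a pkl =
  carrier :: "'a set"
  meet :: "'a \<Rightarrow> 'a \<Rightarrow> 'a"
  join :: "'a \<Rightarrow> 'a \<Rightarrow> 'a"
  neg  :: "'a \<Rightarrow> 'a"
  bot  :: 'a
  top  :: 'a

definition leq :: "'a pkl \<Rightarrow> 'a \<Rightarrow> 'a \<Rightarrow> bool" where
  "leq A x y \<longleftrightarrow> meet A x y = x"

definition closed_ops :: "'a pkl \<Rightarrow> 'a set \<Rightarrow> bool" where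
  "closed_ops A S \<longleftrightarrow> bot A \<in> S \<and> top A \<in> S \<and>
     (\<forall>x\<in>S. \<forall>y\<in>S. meet A x y \<in> S \<and> join A x y \<in> S) \<and> (\<forall>x\<in>S. neg A x \<in> S)"

definition bounded_lattice_alg :: "'a pkl \<Rightarrow> bool" where
  "bounded_lattice_alg A \<longleftrightarrow> closed_ops A (carrier A) \<and>
    (\<forall>x\<in>carrier A. \<forall>y\<in>carrier A.
        meet A x y = meet A y x \<and> join A x y = join A y x \<and>
        meet A x (join A x y) = x \<and> join A x (meet A x y) = x) \<and>
    (\<forall>x\<in>carrier A. \<forall>y\<in>carrier A. \<forall>z\<in>carrier A.
        meet A x (meet A y z) = meet A (meet A x y) z \<and>
        join A x (join A y z) = join A (join A x y) z) \<and>
    (\<forall>x\<in>carrier A. meet A x (bot A) = bot A \<and> join A x (top A) = top A)"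

definition pseudo_kleene :: "'a pkl \<Rightarrow> bool" where
  "pseudo_kleene A \<longleftrightarrow> bounded_lattice_alg A \<and>
    (\<forall>x\<in>carrier A. neg A (neg A x) = x) \<and>
    (\<forall>x\<in>carrier A. \<forall>y\<in>carrier A. leq A x y \<longrightarrow> leq A (neg A y) (neg A x)) \<and>
    (\<forall>x\<in>carrier A. \<forall>y\<in>carrier A.
        leq A (meet A x (neg A x)) (join A y (neg A y)))"

definition super_paraorthomodular :: "'a pkl \<Rightarrow> bool" where
  "super_paraorthomodular A \<longleftrightarrow>
    (\<forall>x\<in>carrier A. \<forall>y\<in>carrier A.
       leq A x y \<and> meet A (neg A x) y = join A (meet A x (neg A x)) (meet A y (neg A y))
       \<longrightarrow> meet A y (join A x (neg A x)) = join A x (meet A y (neg A y))) \<and>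
    (\<forall>x\<in>carrier A. \<forall>y\<in>carrier A.
       leq A x y \<longrightarrow>
       join A (meet A x (neg A x)) (meet A y (neg A y))
         = meet A (meet A (neg A x) y) (neg A (meet A (neg A x) y)))"

definition subalgebra :: "'a set \<Rightarrow> 'a pkl \<Rightarrow> bool" where
  "subalgebra B A \<longleftrightarrow> B \<subseteq> carrier A \<and> closed_ops A B"

definition restrict_alg :: "'a pkl \<Rightarrow> 'a set \<Rightarrow> 'a pkl" where
  "restrict_alg A B = A\<lparr>carrier := B\<rparr>"

definition congruence :: "'a pkl \<Rightarrow> ('a \<times> 'a) set \<Rightarrow> bool" where
  "congruence A \<theta> \<longleftrightarrow> equiv (carrier A) \<theta> \<and>
    (\<forall>x x' y y'. (x, x') \<in> \<theta> \<and> (y, y') \<in> \<theta> \<longrightarrow>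
        (meet A x y, meet A x' y') \<in> \<theta> \<and> (join A x y, join A x' y') \<in> \<theta>) \<and>
    (\<forall>x x'. (x, x') \<in> \<theta> \<longrightarrow> (neg A x, neg A x') \<in> \<theta>)"

definition quotient_alg :: "'a pkl \<Rightarrow> ('a \<times> 'a) set \<Rightarrow> 'a set pkl" where
  "quotient_alg A \<theta> =
    \<lparr> carrier = carrier A // \<theta>,
      meet = (\<lambda>X Y. \<theta> `` {meet A (SOME x. x \<in> X) (SOME y. y \<in> Y)}),
      join = (\<lambda>X Y. \<theta> `` {join A (SOME x. x \<in> X) (SOME y. y \<in> Y)}),
      neg  = (\<lambda>X. \<theta> `` {neg A (SOME x. x \<in> X)}),
      bot  = \<theta> `` {bot A},
      top  = \<theta> `` {top A} \<rparr>"

definition iso :: "'a pkl \<Rightarrow> 'b pkl \<Rightarrow> ('a \<Rightarrow> 'b) \<Rightarrow> bool" where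
  "iso A C f \<longleftrightarrow> bij_betw f (carrier A) (carrier C) \<and>
    (\<forall>x\<in>carrier A. \<forall>y\<in>carrier A.
        f (meet A x y) = meet C (f x) (f y) \<and> f (join A x y) = join C (f x) (f y)) \<and>
    (\<forall>x\<in>carrier A. f (neg A x) = neg C (f x)) \<and>
    f (bot A) = bot C \<and> f (top A) = top C"

definition isomorphic :: "'a pkl \<Rightarrow> 'b pkl \<Rightarrow> bool" where
  "isomorphic A C \<longleftrightarrow> (\<exists>f. iso A C f)"

definition ord_of :: "('a \<times> 'a) set \<Rightarrow> 'a \<Rightarrow> 'a \<Rightarrow> bool" where
  "ord_of C x y \<longleftrightarrow> (x, y) \<in> C\<^sup>*"

definition glb_of :: "('a \<times> 'a) set \<Rightarrow> 'a \<Rightarrow> 'a \<Rightarrow> 'a" where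
  "glb_of C x y = (THE z. ord_of C z x \<and> ord_of C z y \<and>
      (\<forall>w. ord_of C w x \<and> ord_of C w y \<longrightarrow> ord_of C w z))"

definition lub_of :: "('a \<times> 'a) set \<Rightarrow> 'a \<Rightarrow> 'a \<Rightarrow> 'a" where
  "lub_of C x y = (THE z. ord_of C x z \<and> ord_of C y z \<and>
      (\<forall>w. ord_of C x w \<and> ord_of C y w \<longrightarrow> ord_of C z w))"

definition alg_of :: "('a \<times> 'a) set \<Rightarrow> ('a \<Rightarrow> 'a) \<Rightarrow> 'a \<Rightarrow> 'a \<Rightarrow> 'a pkl" where
  "alg_of C n b t = \<lparr> carrier = UNIV, meet = glb_of C, join = lub_of C, neg = n,
                       bot = b, top = t \<rparr>"

datatype b6 = B6_0 | B6_x | B6_y | B6_y' | B6_x' | B6_1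

fun neg6 :: "b6 \<Rightarrow> b6" where
  "neg6 B6_0 = B6_1" | "neg6 B6_1 = B6_0" | "neg6 B6_x = B6_x'" | "neg6 B6_x' = B6_x"
| "neg6 B6_y = B6_y'" | "neg6 B6_y' = B6_y"

definition B6 :: "b6 pkl" where
  "B6 = alg_of {(B6_0, B6_x), (B6_x, B6_y), (B6_y, B6_1),
                (B6_0, B6_y'), (B6_y', B6_x'), (B6_x', B6_1)} neg6 B6_0 B6_1"

datatype b8 = B8_0 | B8_z' | B8_x | B8_y | B8_y' | B8_x' | B8_z | B8_1

fun neg8 :: "b8 \<Rightarrow> b8" where
  "neg8 B8_0 = B8_1" | "neg8 B8_1 = B8_0" | "neg8 B8_x = B8_x'" | "neg8 B8_x' = B8_x"
| "neg8 B8_y = B8_y'" | "neg8 B8_y' = B8_y" | "neg8 B8_z = B8_z'" | "neg8 B8_z' = B8_z"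

definition B8 :: "b8 pkl" where
  "B8 = alg_of {(B8_0, B8_z'), (B8_z', B8_x), (B8_x, B8_y), (B8_y, B8_z),
                (B8_z', B8_y'), (B8_y', B8_x'), (B8_x', B8_z), (B8_z, B8_1)} neg8 B8_0 B8_1"

datatype b8s = S_0 | S_x | S_y | S_z | S_z' | S_y' | S_x' | S_1

fun neg8s :: "b8s \<Rightarrow> b8s" where
  "neg8s S_0 = S_1" | "neg8s S_1 = S_0" | "neg8s S_x = S_x'" | "neg8s S_x' = S_x"
| "neg8s S_y = S_y'" | "neg8s S_y' = S_y" | "neg8s S_z = S_z'" | "neg8s S_z' = S_z"

definition B8s :: "b8s pkl" where
  "B8s = alg_of {(S_0, S_x), (S_0, S_y), (S_x, S_z), (S_y, S_z'), (S_z, S_z'),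
                 (S_z, S_y'), (S_z', S_x'), (S_y', S_1), (S_x', S_1)} neg8s S_0 S_1"

datatype b10 = T_0 | T_x | T_y' | T_m | T_a | T_a' | T_x' | T_y | T_m' | T_1

fun neg10 :: "b10 \<Rightarrow> b10" where
  "neg10 T_0 = T_1" | "neg10 T_1 = T_0" | "neg10 T_x = T_x'" | "neg10 T_x' = T_x"
| "neg10 T_y = T_y'" | "neg10 T_y' = T_y" | "neg10 T_m = T_m'" | "neg10 T_m' = T_m"
| "neg10 T_a = T_a'" | "neg10 T_a' = T_a"

definition B10 :: "b10 pkl" where
  "B10 = alg_of {(T_0, T_y'), (T_0, T_m), (T_0, T_x), (T_y', T_a'), (T_m, T_a'),
                 (T_m, T_a), (T_x, T_a), (T_a', T_x'), (T_a', T_m'), (T_a, T_m'),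
                 (T_a, T_y), (T_x', T_1), (T_m', T_1), (T_y, T_1)} neg10 T_0 T_1"

end

(* One direction is preservation: (SP1) is a quasi-identity, so it passes to subalgebras and
   their isomorphic copies, while (SP2) may be applied to x \<and> y \<le> y instead of x \<le> y and
   therefore also passes to homomorphic images; B6 and B8 violate (SP1), B8* and B10 violate (SP2).

   Conversely, let a law fail at x \<le> y and put k = (x \<and> x') \<or> (y \<and> y'). From the failure one
   reads off, for one of the four algebras T, elements lo(i) of A (i in T) whose intervals
   [lo(i), lo(i')'] are pairwise disjoint and are mapped into one another by the operations of A
   as their indices are by those of T. The union of the intervals is then a subalgebra, and
   "lying in the same interval" is a congruence on it with quotient T; when the intervals are
   points, the union itself is isomorphic to T. For (SP1) the points are
   0 \<le> k \<le> x \<or> (y \<and> y') \<le> y \<and> (x \<or> x') \<le> k', the negations of the middle two, and 1; they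
   form B8, or B6 if k = 0. For (SP2) the intervals realise B8* unless
   (k \<or> y')' \<and> (k \<or> y') = k = (k \<or> x)' \<and> (k \<or> x), and B10 in that case. *)

theory Submission
  imports Defs
begin

section \<open>Lattices with an antitone involution\<close>

locale involution_lattice =
  fixes A :: "'a pkl"
  assumes bounded_lattice: "bounded_lattice_alg A"
    and neg_neg [simp]: "x \<in> carrier A \<Longrightarrow> neg A (neg A x) = x"
    and neg_antitone: "x \<in> carrier A \<Longrightarrow> y \<in> carrier A \<Longrightarrow> leq A x y \<Longrightarrow> leq A (neg A y) (neg A x)"
begin

abbreviation A_meet (infixl "\<^bold>\<and>" 70) where "x \<^bold>\<and> y \<equiv> meet A x y"
abbreviation A_join (infixl "\<^bold>\<or>" 65) where "x \<^bold>\<or> y \<equiv> join A x y"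
abbreviation A_neg ("\<sim>_" [81] 80) where "\<sim>x \<equiv> neg A x"
abbreviation A_leq (infix "\<preceq>" 50) where "x \<preceq> y \<equiv> leq A x y"
abbreviation A_bot ("\<zero>") where "\<zero> \<equiv> bot A"
abbreviation A_top ("\<one>") where "\<one> \<equiv> top A"

lemma meet_closed [simp]: "x \<in> carrier A \<Longrightarrow> y \<in> carrier A \<Longrightarrow> x \<^bold>\<and> y \<in> carrier A"
  and join_closed [simp]: "x \<in> carrier A \<Longrightarrow> y \<in> carrier A \<Longrightarrow> x \<^bold>\<or> y \<in> carrier A"
  and neg_closed [simp]: "x \<in> carrier A \<Longrightarrow> \<sim>x \<in> carrier A"
  and bot_closed [simp]: "\<zero> \<in> carrier A"
  and top_closed [simp]: "\<one> \<in> carrier A"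
  using bounded_lattice by (auto simp: bounded_lattice_alg_def closed_ops_def)

lemma meet_comm: "x \<in> carrier A \<Longrightarrow> y \<in> carrier A \<Longrightarrow> x \<^bold>\<and> y = y \<^bold>\<and> x"
  and join_comm: "x \<in> carrier A \<Longrightarrow> y \<in> carrier A \<Longrightarrow> x \<^bold>\<or> y = y \<^bold>\<or> x"
  and meet_join_absorb: "x \<in> carrier A \<Longrightarrow> y \<in> carrier A \<Longrightarrow> x \<^bold>\<and> (x \<^bold>\<or> y) = x"
  and join_meet_absorb: "x \<in> carrier A \<Longrightarrow> y \<in> carrier A \<Longrightarrow> x \<^bold>\<or> (x \<^bold>\<and> y) = x"
  and meet_assoc: "x \<in> carrier A \<Longrightarrow> y \<in> carrier A \<Longrightarrow> z \<in> carrier A \<Longrightarrow>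
    x \<^bold>\<and> (y \<^bold>\<and> z) = x \<^bold>\<and> y \<^bold>\<and> z"
  and join_assoc: "x \<in> carrier A \<Longrightarrow> y \<in> carrier A \<Longrightarrow> z \<in> carrier A \<Longrightarrow>
    x \<^bold>\<or> (y \<^bold>\<or> z) = x \<^bold>\<or> y \<^bold>\<or> z"
  and meet_bot: "x \<in> carrier A \<Longrightarrow> x \<^bold>\<and> \<zero> = \<zero>"
  and join_top: "x \<in> carrier A \<Longrightarrow> x \<^bold>\<or> \<one> = \<one>"
  using bounded_lattice unfolding bounded_lattice_alg_def by blast+

lemma meet_idem [simp]: "x \<in> carrier A \<Longrightarrow> x \<^bold>\<and> x = x"
  using meet_join_absorb[of x "x \<^bold>\<and> x"] join_meet_absorb[of x x] by simp

lemma le_refl [simp]: "x \<in> carrier A \<Longrightarrow> x \<preceq> x"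
  by (simp add: leq_def)

lemma le_trans:
  "x \<preceq> y \<Longrightarrow> y \<preceq> z \<Longrightarrow> x \<in> carrier A \<Longrightarrow> y \<in> carrier A \<Longrightarrow> z \<in> carrier A \<Longrightarrow> x \<preceq> z"
  unfolding leq_def by (metis meet_assoc)

lemma le_antisym: "x \<preceq> y \<Longrightarrow> y \<preceq> x \<Longrightarrow> x \<in> carrier A \<Longrightarrow> y \<in> carrier A \<Longrightarrow> x = y"
  unfolding leq_def by (metis meet_comm)

lemma le_iff_join: "x \<in> carrier A \<Longrightarrow> y \<in> carrier A \<Longrightarrow> x \<preceq> y \<longleftrightarrow> x \<^bold>\<or> y = y"
  unfolding leq_def
  using join_comm[of x y] meet_comm[of x y] meet_join_absorb[of x y] join_meet_absorb[of y x]
  by auto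

lemma meet_le1 [simp]: "x \<in> carrier A \<Longrightarrow> y \<in> carrier A \<Longrightarrow> x \<^bold>\<and> y \<preceq> x"
  unfolding leq_def using meet_assoc[of x y x] meet_assoc[of x x y] meet_comm[of y x] by simp

lemma meet_le2 [simp]: "x \<in> carrier A \<Longrightarrow> y \<in> carrier A \<Longrightarrow> x \<^bold>\<and> y \<preceq> y"
  unfolding leq_def using meet_assoc[of x y y] by simp

lemma join_ge1 [simp]: "x \<in> carrier A \<Longrightarrow> y \<in> carrier A \<Longrightarrow> x \<preceq> x \<^bold>\<or> y"
  unfolding leq_def by (simp add: meet_join_absorb)

lemma join_ge2 [simp]: "x \<in> carrier A \<Longrightarrow> y \<in> carrier A \<Longrightarrow> y \<preceq> x \<^bold>\<or> y"
  using join_ge1[of y x] join_comm[of x y] by simp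

lemma le_meet_iff [simp]:
  "x \<in> carrier A \<Longrightarrow> y \<in> carrier A \<Longrightarrow> z \<in> carrier A \<Longrightarrow> z \<preceq> x \<^bold>\<and> y \<longleftrightarrow> z \<preceq> x \<and> z \<preceq> y"
proof
  assume "x \<in> carrier A" "y \<in> carrier A" "z \<in> carrier A" "z \<preceq> x \<^bold>\<and> y"
  then show "z \<preceq> x \<and> z \<preceq> y"
    using le_trans[of z "x \<^bold>\<and> y"] by simp
next
  assume "x \<in> carrier A" "y \<in> carrier A" "z \<in> carrier A" "z \<preceq> x \<and> z \<preceq> y"
  then show "z \<preceq> x \<^bold>\<and> y"
    unfolding leq_def by (simp add: meet_assoc)
qed

lemma join_le_iff [simp]:
  "x \<in> carrier A \<Longrightarrow> y \<in> carrier A \<Longrightarrow> z \<in> carrier A \<Longrightarrow> x \<^bold>\<or> y \<preceq> z \<longleftrightarrow> x \<preceq> z \<and> y \<preceq> z"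
proof
  assume "x \<in> carrier A" "y \<in> carrier A" "z \<in> carrier A" "x \<^bold>\<or> y \<preceq> z"
  then show "x \<preceq> z \<and> y \<preceq> z"
    using le_trans[of x "x \<^bold>\<or> y"] le_trans[of y "x \<^bold>\<or> y"] by simp
next
  assume "x \<in> carrier A" "y \<in> carrier A" "z \<in> carrier A" "x \<preceq> z \<and> y \<preceq> z"
  then show "x \<^bold>\<or> y \<preceq> z"
    by (simp add: le_iff_join join_assoc[symmetric])
qed

lemma le_meetI1: "x \<preceq> z \<Longrightarrow> x \<in> carrier A \<Longrightarrow> y \<in> carrier A \<Longrightarrow> z \<in> carrier A \<Longrightarrow> x \<^bold>\<and> y \<preceq> z"
  by (meson le_trans meet_closed meet_le1)

lemma le_meetI2: "y \<preceq> z \<Longrightarrow> x \<in> carrier A \<Longrightarrow> y \<in> carrier A \<Longrightarrow> z \<in> carrier A \<Longrightarrow> x \<^bold>\<and> y \<preceq> z"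
  by (meson le_trans meet_closed meet_le2)

lemma le_joinI1: "z \<preceq> x \<Longrightarrow> x \<in> carrier A \<Longrightarrow> y \<in> carrier A \<Longrightarrow> z \<in> carrier A \<Longrightarrow> z \<preceq> x \<^bold>\<or> y"
  by (meson le_trans join_closed join_ge1)

lemma le_joinI2: "z \<preceq> y \<Longrightarrow> x \<in> carrier A \<Longrightarrow> y \<in> carrier A \<Longrightarrow> z \<in> carrier A \<Longrightarrow> z \<preceq> x \<^bold>\<or> y"
  by (meson le_trans join_closed join_ge2)

lemma bot_le [simp]: "x \<in> carrier A \<Longrightarrow> \<zero> \<preceq> x"
  unfolding leq_def using meet_bot[of x] meet_comm[of x \<zero>] by simp

lemma le_top [simp]: "x \<in> carrier A \<Longrightarrow> x \<preceq> \<one>"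
  by (simp add: le_iff_join join_top)

lemma le_bot_iff [simp]: "x \<in> carrier A \<Longrightarrow> x \<preceq> \<zero> \<longleftrightarrow> x = \<zero>"
  using le_antisym bot_le bot_closed by blast

lemma top_le_iff [simp]: "x \<in> carrier A \<Longrightarrow> \<one> \<preceq> x \<longleftrightarrow> x = \<one>"
  using le_antisym le_top top_closed by blast

lemma neg_le_neg_iff [simp]: "x \<in> carrier A \<Longrightarrow> y \<in> carrier A \<Longrightarrow> \<sim>x \<preceq> \<sim>y \<longleftrightarrow> y \<preceq> x"
  using neg_antitone[of y x] neg_antitone[of "\<sim>x" "\<sim>y"] by auto

lemma le_neg_iff: "x \<in> carrier A \<Longrightarrow> y \<in> carrier A \<Longrightarrow> x \<preceq> \<sim>y \<longleftrightarrow> y \<preceq> \<sim>x"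
  using neg_le_neg_iff[of "\<sim>y" x] by simp

lemma neg_le_iff: "x \<in> carrier A \<Longrightarrow> y \<in> carrier A \<Longrightarrow> \<sim>x \<preceq> y \<longleftrightarrow> \<sim>y \<preceq> x"
  using neg_le_neg_iff[of x "\<sim>y"] by simp

lemma neg_meet [simp]: "x \<in> carrier A \<Longrightarrow> y \<in> carrier A \<Longrightarrow> \<sim>(x \<^bold>\<and> y) = \<sim>x \<^bold>\<or> \<sim>y"
proof -
  assume xy: "x \<in> carrier A" "y \<in> carrier A"
  have "\<sim>x \<^bold>\<or> \<sim>y \<preceq> \<sim>(x \<^bold>\<and> y)"
    using xy by simp
  moreover have "\<sim>(\<sim>x \<^bold>\<or> \<sim>y) \<preceq> x" "\<sim>(\<sim>x \<^bold>\<or> \<sim>y) \<preceq> y"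
    using xy neg_le_iff[of "\<sim>x \<^bold>\<or> \<sim>y" x] neg_le_iff[of "\<sim>x \<^bold>\<or> \<sim>y" y] by simp_all
  then have "\<sim>(x \<^bold>\<and> y) \<preceq> \<sim>x \<^bold>\<or> \<sim>y"
    using xy neg_le_iff[of "x \<^bold>\<and> y" "\<sim>x \<^bold>\<or> \<sim>y"] by simp
  ultimately show ?thesis
    using xy by (simp add: le_antisym)
qed

lemma neg_join [simp]: "x \<in> carrier A \<Longrightarrow> y \<in> carrier A \<Longrightarrow> \<sim>(x \<^bold>\<or> y) = \<sim>x \<^bold>\<and> \<sim>y"
proof -
  assume xy: "x \<in> carrier A" "y \<in> carrier A"
  then have "x \<^bold>\<or> y = \<sim>(\<sim>x \<^bold>\<and> \<sim>y)"
    using neg_meet[of "\<sim>x" "\<sim>y"] by simp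
  then show ?thesis
    using xy by (simp del: neg_meet)
qed

lemma neg_bot [simp]: "\<sim>\<zero> = \<one>"
  using le_neg_iff[of \<one> \<zero>] by simp

lemma neg_top [simp]: "\<sim>\<one> = \<zero>"
  using neg_neg[of \<zero>] by simp

lemma join_eq_neg_meet: "x \<in> carrier A \<Longrightarrow> y \<in> carrier A \<Longrightarrow> x \<^bold>\<or> y = \<sim>(\<sim>x \<^bold>\<and> \<sim>y)"
  by simp

end

locale pseudo_kleene_lattice = involution_lattice +
  assumes kleene: "x \<in> carrier A \<Longrightarrow> y \<in> carrier A \<Longrightarrow> x \<^bold>\<and> \<sim>x \<preceq> y \<^bold>\<or> \<sim>y"

lemma pseudo_kleene_lattice_if_pseudo_kleene: "pseudo_kleene A \<Longrightarrow> pseudo_kleene_lattice A"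
  unfolding pseudo_kleene_def by unfold_locales blast+

lemma (in pseudo_kleene_lattice) kleene_neg_join: "u \<in> carrier A \<Longrightarrow> v \<in> carrier A \<Longrightarrow> u \<^bold>\<and> \<sim>u \<preceq> \<sim>v \<^bold>\<or> v"
  using kleene[of u v] by (simp add: join_comm)

section \<open>The laws (SP1) and (SP2) under subalgebras and homomorphic images\<close>

definition SP1 :: "'a pkl \<Rightarrow> bool" where
  "SP1 A \<longleftrightarrow> (\<forall>x\<in>carrier A. \<forall>y\<in>carrier A.
     leq A x y \<and> meet A (neg A x) y = join A (meet A x (neg A x)) (meet A y (neg A y))
     \<longrightarrow> meet A y (join A x (neg A x)) = join A x (meet A y (neg A y)))"

definition SP2 :: "'a pkl \<Rightarrow> bool" where
  "SP2 A \<longleftrightarrow> (\<forall>x\<in>carrier A. \<forall>y\<in>carrier A. leq A x y \<longrightarrow>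
     join A (meet A x (neg A x)) (meet A y (neg A y))
       = meet A (meet A (neg A x) y) (neg A (meet A (neg A x) y)))"

lemma SP1D:
  "SP1 A \<Longrightarrow> x \<in> carrier A \<Longrightarrow> y \<in> carrier A \<Longrightarrow> leq A x y \<Longrightarrow>
    meet A (neg A x) y = join A (meet A x (neg A x)) (meet A y (neg A y)) \<Longrightarrow>
    meet A y (join A x (neg A x)) = join A x (meet A y (neg A y))"
  by (simp add: SP1_def)

lemma SP2D:
  "SP2 A \<Longrightarrow> x \<in> carrier A \<Longrightarrow> y \<in> carrier A \<Longrightarrow> leq A x y \<Longrightarrow>
    join A (meet A x (neg A x)) (meet A y (neg A y))
      = meet A (meet A (neg A x) y) (neg A (meet A (neg A x) y))"
  by (simp add: SP2_def)

lemma super_paraorthomodular_iff: "super_paraorthomodular A \<longleftrightarrow> SP1 A \<and> SP2 A"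
  by (simp add: super_paraorthomodular_def SP1_def SP2_def)

lemma SP1_restrict: "SP1 A \<Longrightarrow> B \<subseteq> carrier A \<Longrightarrow> SP1 (restrict_alg A B)"
  by (auto simp: SP1_def restrict_alg_def leq_def)

lemma SP2_restrict: "SP2 A \<Longrightarrow> B \<subseteq> carrier A \<Longrightarrow> SP2 (restrict_alg A B)"
  by (auto simp: SP2_def restrict_alg_def leq_def)

definition epimorphism :: "'a pkl \<Rightarrow> 'b pkl \<Rightarrow> ('a \<Rightarrow> 'b) \<Rightarrow> bool" where
  "epimorphism A T h \<longleftrightarrow> h ` carrier A = carrier T \<and>
    (\<forall>x\<in>carrier A. \<forall>y\<in>carrier A.
        h (meet A x y) = meet T (h x) (h y) \<and> h (join A x y) = join T (h x) (h y)) \<and>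
    (\<forall>x\<in>carrier A. h (neg A x) = neg T (h x)) \<and> h (bot A) = bot T \<and> h (top A) = top T"

lemma epimorphism_if_iso: "iso A T f \<Longrightarrow> epimorphism A T f"
  by (simp add: iso_def epimorphism_def bij_betw_def)

lemma epimorphism_comp:
  assumes "epimorphism A T g" "epimorphism T U f"
  shows "epimorphism A U (f \<circ> g)"
proof -
  have "g x \<in> carrier T" if "x \<in> carrier A" for x
    using assms(1) that by (auto simp: epimorphism_def)
  then show ?thesis
    using assms unfolding epimorphism_def by (simp flip: image_image)
qed

lemma iso_if_epimorphism_inj_on: "epimorphism A T h \<Longrightarrow> inj_on h (carrier A) \<Longrightarrow> iso A T h"
  by (simp add: iso_def epimorphism_def bij_betw_def)

lemma epimorphism_quotient_map:
  assumes cong: "congruence A \<theta>"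
  shows "epimorphism A (quotient_alg A \<theta>) (\<lambda>x. \<theta> `` {x})"
proof -
  have equiv: "equiv (carrier A) \<theta>"
    using cong by (simp add: congruence_def)
  have rep: "(x, SOME x'. x' \<in> \<theta> `` {x}) \<in> \<theta>" if "x \<in> carrier A" for x
    using that equiv by (metis Image_singleton_iff equiv_class_self someI)
  have "\<theta> `` {meet A x y} = \<theta> `` {meet A x' y'} \<and> \<theta> `` {join A x y} = \<theta> `` {join A x' y'}"
    if "(x, x') \<in> \<theta>" "(y, y') \<in> \<theta>" for x x' y y'
    using that cong equiv by (simp add: congruence_def equiv_class_eq)
  moreover have "\<theta> `` {neg A x} = \<theta> `` {neg A x'}" if "(x, x') \<in> \<theta>" for x x'
    using that cong equiv by (simp add: congruence_def equiv_class_eq)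
  moreover have "(\<lambda>x. \<theta> `` {x}) ` carrier A = carrier A // \<theta>"
    by (auto simp: quotient_def)
  ultimately show ?thesis
    using rep by (simp add: epimorphism_def quotient_alg_def)
qed

lemma epimorphism_hom:
  "epimorphism A T h \<Longrightarrow> x \<in> carrier A \<Longrightarrow> y \<in> carrier A \<Longrightarrow> h (meet A x y) = meet T (h x) (h y)"
  "epimorphism A T h \<Longrightarrow> x \<in> carrier A \<Longrightarrow> y \<in> carrier A \<Longrightarrow> h (join A x y) = join T (h x) (h y)"
  "epimorphism A T h \<Longrightarrow> x \<in> carrier A \<Longrightarrow> h (neg A x) = neg T (h x)"
  by (simp_all add: epimorphism_def)

definition hom_kernel :: "'a pkl \<Rightarrow> ('a \<Rightarrow> 'b) \<Rightarrow> ('a \<times> 'a) set" where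
  "hom_kernel A h = {(x, y). x \<in> carrier A \<and> y \<in> carrier A \<and> h x = h y}"

lemma hom_kernel_class: "x \<in> carrier A \<Longrightarrow> hom_kernel A h `` {x} = {y \<in> carrier A. h y = h x}"
  by (auto simp: hom_kernel_def)

lemma hom_kernel_class_eq_iff:
  assumes "x \<in> carrier A" "y \<in> carrier A"
  shows "hom_kernel A h `` {x} = hom_kernel A h `` {y} \<longleftrightarrow> h x = h y"
proof
  assume eq: "hom_kernel A h `` {x} = hom_kernel A h `` {y}"
  have "x \<in> hom_kernel A h `` {x}"
    using assms by (simp add: hom_kernel_def)
  then have "(y, x) \<in> hom_kernel A h"
    unfolding eq by simp
  then show "h x = h y"
    by (simp add: hom_kernel_def)
qed (use assms in \<open>simp add: hom_kernel_class\<close>)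

lemma congruence_hom_kernel:
  assumes "closed_ops A (carrier A)" and "epimorphism A T h"
  shows "congruence A (hom_kernel A h)"
  unfolding congruence_def
proof (intro conjI allI impI; (elim conjE)?)
  show "equiv (carrier A) (hom_kernel A h)"
    by (auto simp: equiv_def refl_on_def sym_def trans_def hom_kernel_def)
  fix x x' y y'
  assume "(x, x') \<in> hom_kernel A h" "(y, y') \<in> hom_kernel A h"
  then show "(meet A x y, meet A x' y') \<in> hom_kernel A h"
    and "(join A x y, join A x' y') \<in> hom_kernel A h"
    using assms by (simp_all add: hom_kernel_def closed_ops_def epimorphism_hom)
next
  fix x x'
  assume "(x, x') \<in> hom_kernel A h"
  then show "(neg A x, neg A x') \<in> hom_kernel A h"
    using assms by (simp add: hom_kernel_def closed_ops_def epimorphism_hom)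
qed

lemma hom_kernel_class_rep: "x \<in> carrier A \<Longrightarrow> h (SOME y. y \<in> hom_kernel A h `` {x}) = h x"
proof -
  assume "x \<in> carrier A"
  then have "x \<in> hom_kernel A h `` {x}"
    by (simp add: hom_kernel_def)
  then have "(SOME y. y \<in> hom_kernel A h `` {x}) \<in> hom_kernel A h `` {x}"
    by (rule someI)
  with \<open>x \<in> carrier A\<close> show ?thesis
    by (simp add: hom_kernel_def)
qed

lemma hom_kernel_quotient_rep:
  assumes "X \<in> carrier A // hom_kernel A h"
  shows "(SOME x. x \<in> X) \<in> carrier A" "X = hom_kernel A h `` {SOME x. x \<in> X}"
proof -
  obtain x where x: "x \<in> carrier A" "X = hom_kernel A h `` {x}"
    using assms by (rule quotientE)
  then have "x \<in> X"
    by (simp add: hom_kernel_def)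
  then have "(SOME x. x \<in> X) \<in> X"
    by (rule someI)
  then show "(SOME x. x \<in> X) \<in> carrier A" "X = hom_kernel A h `` {SOME x. x \<in> X}"
    using x by (auto simp: hom_kernel_def)
qed

lemma iso_quotient_hom_kernel:
  assumes closed: "closed_ops A (carrier A)" and h: "epimorphism A T h"
  shows "iso (quotient_alg A (hom_kernel A h)) T (\<lambda>X. h (SOME x. x \<in> X))"
proof -
  let ?K = "hom_kernel A h" and ?F = "\<lambda>X. h (SOME x. x \<in> X)"
  note F_class = hom_kernel_class_rep[of _ A h] and rep = hom_kernel_quotient_rep[of _ A h]
  have "inj_on ?F (carrier A // ?K)"
  proof (rule inj_onI)
    fix X Y assume X: "X \<in> carrier A // ?K" and Y: "Y \<in> carrier A // ?K" and eq: "?F X = ?F Y"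
    have "X = ?K `` {SOME x. x \<in> X}"
      using X by (rule rep)
    also have "\<dots> = ?K `` {SOME y. y \<in> Y}"
      using eq rep(1)[OF X] rep(1)[OF Y] by (simp add: hom_kernel_class_eq_iff)
    also have "\<dots> = Y"
      using Y by (rule rep(2)[symmetric])
    finally show "X = Y" .
  qed
  moreover have "?F ` (carrier A // ?K) = carrier T"
  proof
    show "?F ` (carrier A // ?K) \<subseteq> carrier T"
      using h rep by (auto simp: epimorphism_def)
    show "carrier T \<subseteq> ?F ` (carrier A // ?K)"
    proof
      fix t assume "t \<in> carrier T"
      then have "t \<in> h ` carrier A"
        using h by (simp add: epimorphism_def)
      then obtain x where "x \<in> carrier A" "t = h x"
        by blast
      then show "t \<in> ?F ` (carrier A // ?K)"
        using F_class by (metis image_eqI quotientI)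
    qed
  qed
  moreover have "?F (?K `` {meet A (SOME x. x \<in> X) (SOME y. y \<in> Y)}) = meet T (?F X) (?F Y)"
    "?F (?K `` {join A (SOME x. x \<in> X) (SOME y. y \<in> Y)}) = join T (?F X) (?F Y)"
    if "X \<in> carrier A // ?K" "Y \<in> carrier A // ?K" for X Y
    using closed rep[OF that(1)] rep[OF that(2)]
    by (simp_all add: F_class closed_ops_def epimorphism_hom[OF h] del: Image_singleton_iff)
  moreover have "?F (?K `` {neg A (SOME x. x \<in> X)}) = neg T (?F X)" if "X \<in> carrier A // ?K" for X
    using closed rep[OF that]
    by (simp add: F_class closed_ops_def epimorphism_hom[OF h] del: Image_singleton_iff)
  moreover have "?F (?K `` {bot A}) = bot T" "?F (?K `` {top A}) = top T"
    using closed h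
    by (simp_all add: F_class closed_ops_def epimorphism_def del: Image_singleton_iff)
  ultimately show ?thesis
    unfolding iso_def bij_betw_def by (simp add: quotient_alg_def del: Image_singleton_iff)
qed

context involution_lattice
begin

lemma epimorphism_lift_leq:
  assumes h: "epimorphism A T h" and pq: "p \<in> carrier T" "q \<in> carrier T" "leq T p q"
  obtains u v where "u \<in> carrier A" "v \<in> carrier A" "u \<preceq> v" "h u = p" "h v = q"
proof -
  have "p \<in> h ` carrier A" "q \<in> h ` carrier A"
    using h pq by (simp_all add: epimorphism_def)
  then obtain u v where uv: "u \<in> carrier A" "v \<in> carrier A" "h u = p" "h v = q"
    by blast
  then have "h (u \<^bold>\<and> v) = p"
    using h pq by (simp add: epimorphism_hom leq_def)
  with uv show thesis
    using that[of "u \<^bold>\<and> v" v] by simp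
qed

lemma SP1_epimorphism:
  assumes "SP1 A" and h: "epimorphism A T h" and inj: "inj_on h (carrier A)"
  shows "SP1 T"
  unfolding SP1_def
proof (intro ballI impI, elim conjE)
  fix p q
  assume pq: "p \<in> carrier T" "q \<in> carrier T" "leq T p q"
    and hyp: "meet T (neg T p) q = join T (meet T p (neg T p)) (meet T q (neg T q))"
  obtain u v where uv: "u \<in> carrier A" "v \<in> carrier A" "u \<preceq> v" "h u = p" "h v = q"
    using h pq by (rule epimorphism_lift_leq)
  have "h (\<sim>u \<^bold>\<and> v) = h (u \<^bold>\<and> \<sim>u \<^bold>\<or> v \<^bold>\<and> \<sim>v)"
    using hyp uv h by (simp add: epimorphism_hom)
  then have "\<sim>u \<^bold>\<and> v = u \<^bold>\<and> \<sim>u \<^bold>\<or> v \<^bold>\<and> \<sim>v"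
    using inj uv by (simp add: inj_on_def)
  then have "v \<^bold>\<and> (u \<^bold>\<or> \<sim>u) = u \<^bold>\<or> v \<^bold>\<and> \<sim>v"
    using \<open>SP1 A\<close> uv unfolding SP1_def by blast
  then have "h (v \<^bold>\<and> (u \<^bold>\<or> \<sim>u)) = h (u \<^bold>\<or> v \<^bold>\<and> \<sim>v)"
    by (rule arg_cong)
  then show "meet T q (join T p (neg T p)) = join T p (meet T q (neg T q))"
    using uv h by (simp add: epimorphism_hom del: neg_meet neg_join)
qed

lemma SP2_epimorphism:
  assumes "SP2 A" and h: "epimorphism A T h"
  shows "SP2 T"
  unfolding SP2_def
proof (intro ballI impI)
  fix p q
  assume pq: "p \<in> carrier T" "q \<in> carrier T" "leq T p q"
  obtain u v where uv: "u \<in> carrier A" "v \<in> carrier A" "u \<preceq> v" "h u = p" "h v = q"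
    using h pq by (rule epimorphism_lift_leq)
  then have "u \<^bold>\<and> \<sim>u \<^bold>\<or> v \<^bold>\<and> \<sim>v = \<sim>u \<^bold>\<and> v \<^bold>\<and> \<sim>(\<sim>u \<^bold>\<and> v)"
    using \<open>SP2 A\<close> unfolding SP2_def by blast
  then have "h (u \<^bold>\<and> \<sim>u \<^bold>\<or> v \<^bold>\<and> \<sim>v) = h (\<sim>u \<^bold>\<and> v \<^bold>\<and> \<sim>(\<sim>u \<^bold>\<and> v))"
    by (rule arg_cong)
  then show "join T (meet T p (neg T p)) (meet T q (neg T q))
      = meet T (meet T (neg T p) q) (neg T (meet T (neg T p) q))"
    using uv h by (simp add: epimorphism_hom del: neg_meet neg_join)
qed

lemma subalgebra_involution_lattice:
  assumes "subalgebra B A"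
  shows "involution_lattice (restrict_alg A B)"
proof
  have "B \<subseteq> carrier A" "closed_ops A B"
    using assms by (simp_all add: subalgebra_def)
  then show "bounded_lattice_alg (restrict_alg A B)"
    using bounded_lattice unfolding bounded_lattice_alg_def closed_ops_def
    by (simp add: restrict_alg_def) blast
qed (use assms neg_antitone in \<open>auto simp: subalgebra_def restrict_alg_def leq_def\<close>)

lemma SP1_if_isomorphic_subalgebra:
  assumes "SP1 A" and sub: "subalgebra B A" and "isomorphic (restrict_alg A B) T"
  shows "SP1 T"
proof -
  obtain f where f: "iso (restrict_alg A B) T f"
    using assms(3) by (auto simp: isomorphic_def)
  have "SP1 (restrict_alg A B)"
    using assms(1) sub by (simp add: SP1_restrict subalgebra_def)
  moreover have "inj_on f (carrier (restrict_alg A B))"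
    using f by (simp add: iso_def bij_betw_def)
  ultimately show ?thesis
    using involution_lattice.SP1_epimorphism[OF subalgebra_involution_lattice[OF sub]]
      epimorphism_if_iso[OF f] by blast
qed

lemma SP2_if_isomorphic_quotient:
  assumes "SP2 A" and sub: "subalgebra B A" and cong: "congruence (restrict_alg A B) \<theta>"
    and "isomorphic (quotient_alg (restrict_alg A B) \<theta>) T"
  shows "SP2 T"
proof -
  obtain F where F: "iso (quotient_alg (restrict_alg A B) \<theta>) T F"
    using assms(4) by (auto simp: isomorphic_def)
  have "SP2 (restrict_alg A B)"
    using assms(1) sub by (simp add: SP2_restrict subalgebra_def)
  moreover have "epimorphism (restrict_alg A B) T (F \<circ> (\<lambda>x. \<theta> `` {x}))"
    using epimorphism_quotient_map[OF cong] epimorphism_if_iso[OF F] by (rule epimorphism_comp)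
  ultimately show ?thesis
    using involution_lattice.SP2_epimorphism[OF subalgebra_involution_lattice[OF sub]] by blast
qed

end

section \<open>Finite lattices given by their Hasse diagrams\<close>

locale hasse_presentation =
  fixes C :: "('a \<times> 'a) set" and le :: "'a \<Rightarrow> 'a \<Rightarrow> bool" and n :: "'a \<Rightarrow> 'a" and b t :: 'a
  assumes finite_UNIV: "finite (UNIV :: 'a set)"
    and le_refl: "le i i"
    and le_antisym: "le i j \<Longrightarrow> le j i \<Longrightarrow> i = j"
    and le_cover_step: "le i j \<Longrightarrow> (j, k) \<in> C \<Longrightarrow> le i k"
    and le_cover_descent: "le i j \<Longrightarrow> i \<noteq> j \<Longrightarrow> \<exists>k. (i, k) \<in> C \<and> k \<noteq> i \<and> le k j"
    and glb_exists: "\<exists>z. le z i \<and> le z j \<and> (\<forall>w. le w i \<and> le w j \<longrightarrow> le w z)"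
    and bot_least: "le b i"
    and n_involutive: "n (n i) = i"
    and n_antitone: "le i j \<Longrightarrow> le (n j) (n i)"
    and top_eq: "t = n b"
begin

lemma rtrancl_imp_le: "(i, j) \<in> C\<^sup>* \<Longrightarrow> le i j"
  by (induction rule: rtrancl_induct) (use le_refl le_cover_step in blast)+

lemma le_imp_rtrancl: "le i j \<Longrightarrow> (i, j) \<in> C\<^sup>*"
proof (induction "card (UNIV - {w. (w, i) \<in> C\<^sup>*})" arbitrary: i rule: less_induct)
  case less
  show ?case
  proof (cases "i = j")
    case False
    then obtain k where k: "(i, k) \<in> C" "k \<noteq> i" "le k j"
      using le_cover_descent less.prems by blast
    have "(k, i) \<notin> C\<^sup>*"
    proof
      assume "(k, i) \<in> C\<^sup>*"
      then have "le k i"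
        by (rule rtrancl_imp_le)
      moreover have "le i k"
        using le_refl k(1) by (rule le_cover_step)
      ultimately show False
        using k(2) le_antisym by blast
    qed
    moreover have "{w. (w, i) \<in> C\<^sup>*} \<subseteq> {w. (w, k) \<in> C\<^sup>*}"
      using k(1) by (auto intro: rtrancl_into_rtrancl)
    ultimately have "UNIV - {w. (w, k) \<in> C\<^sup>*} \<subset> UNIV - {w. (w, i) \<in> C\<^sup>*}"
      by blast
    then have "card (UNIV - {w. (w, k) \<in> C\<^sup>*}) < card (UNIV - {w. (w, i) \<in> C\<^sup>*})"
      using finite_UNIV by (simp add: psubset_card_mono)
    then have "(k, j) \<in> C\<^sup>*"
      using less.hyps k(3) by blast
    with k(1) show ?thesis
      by (rule converse_rtrancl_into_rtrancl)
  qed simp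
qed

lemma ord_of_iff: "ord_of C i j \<longleftrightarrow> le i j"
  using le_imp_rtrancl rtrancl_imp_le by (auto simp: ord_of_def)

lemma le_trans: "le i j \<Longrightarrow> le j k \<Longrightarrow> le i k"
  by (meson le_imp_rtrancl rtrancl_imp_le rtrancl_trans)

lemma glb_of_eqI:
  assumes "le z i" "le z j" "\<And>w. le w i \<Longrightarrow> le w j \<Longrightarrow> le w z"
  shows "glb_of C i j = z"
  unfolding glb_of_def ord_of_iff by (rule the_equality) (use assms le_antisym in blast)+

lemma lub_of_eqI:
  assumes "le i z" "le j z" "\<And>w. le i w \<Longrightarrow> le j w \<Longrightarrow> le z w"
  shows "lub_of C i j = z"
  unfolding lub_of_def ord_of_iff by (rule the_equality) (use assms le_antisym in blast)+

lemma glb_of_greatest: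
  "le (glb_of C i j) i" "le (glb_of C i j) j" "le w i \<Longrightarrow> le w j \<Longrightarrow> le w (glb_of C i j)"
proof -
  obtain z where "le z i" "le z j" "\<And>w. le w i \<Longrightarrow> le w j \<Longrightarrow> le w z"
    using glb_exists by blast
  moreover from this have "glb_of C i j = z"
    by (rule glb_of_eqI)
  ultimately show "le (glb_of C i j) i" "le (glb_of C i j) j"
    "le w i \<Longrightarrow> le w j \<Longrightarrow> le w (glb_of C i j)"
    by simp_all
qed

lemma lub_of_eq_n_glb_of: "lub_of C i j = n (glb_of C (n i) (n j))"
  using glb_of_greatest[of "n i" "n j"] n_antitone n_involutive
  by (intro lub_of_eqI) (metis, metis, metis glb_of_greatest(3))

lemma lub_of_least:
  "le i (lub_of C i j)" "le j (lub_of C i j)" "le i w \<Longrightarrow> le j w \<Longrightarrow> le (lub_of C i j) w"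
  unfolding lub_of_eq_n_glb_of using glb_of_greatest[of "n i" "n j"] n_antitone n_involutive
  by (metis, metis, metis glb_of_greatest(3))

lemma leq_iff [simp]: "leq (alg_of C n b t) i j \<longleftrightarrow> le i j"
  unfolding leq_def alg_of_def using glb_of_greatest[of i j] glb_of_eqI[of i i j] le_refl
  by auto

lemma meet_eqI:
  "le z i \<Longrightarrow> le z j \<Longrightarrow> \<forall>w. le w i \<and> le w j \<longrightarrow> le w z \<Longrightarrow> meet (alg_of C n b t) i j = z"
  by (simp add: alg_of_def glb_of_eqI)

lemma leq_imp_rtrancl: "leq (alg_of C n b t) i j \<Longrightarrow> (i, j) \<in> C\<^sup>*"
  using ord_of_iff by (simp add: leq_iff ord_of_def)

lemma involution_lattice: "involution_lattice (alg_of C n b t)"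
proof
  note glb = glb_of_greatest and lub = lub_of_least
  show "bounded_lattice_alg (alg_of C n b t)"
    unfolding bounded_lattice_alg_def closed_ops_def
    by (simp add: alg_of_def; intro conjI allI glb_of_eqI lub_of_eqI)
       (use glb lub le_refl le_trans bot_least n_antitone n_involutive top_eq in metis)+
qed (simp_all add: alg_of_def n_involutive leq_iff[unfolded alg_of_def] n_antitone)

lemma alg_of_simps [simp]:
  "carrier (alg_of C n b t) = UNIV" "neg (alg_of C n b t) = n"
  "bot (alg_of C n b t) = b" "top (alg_of C n b t) = t"
  by (simp_all add: alg_of_def)

lemma meet_absorb1 [simp]: "le i j \<Longrightarrow> meet (alg_of C n b t) i j = i"
  using leq_iff by (simp add: leq_def)

lemma meet_comm: "meet (alg_of C n b t) i j = meet (alg_of C n b t) j i"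
  using involution_lattice by (simp add: involution_lattice.meet_comm)

lemma meet_absorb2 [simp]: "le j i \<Longrightarrow> meet (alg_of C n b t) i j = j"
  by (subst meet_comm) simp

lemma join_eq_n_meet [simp]: "join (alg_of C n b t) i j = n (meet (alg_of C n b t) (n i) (n j))"
  by (simp add: alg_of_def lub_of_eq_n_glb_of)

end

definition covers_B6 :: "(b6 \<times> b6) set" where
  "covers_B6 = {(B6_0, B6_x), (B6_x, B6_y), (B6_y, B6_1),
                (B6_0, B6_y'), (B6_y', B6_x'), (B6_x', B6_1)}"

fun le_B6 :: "b6 \<Rightarrow> b6 \<Rightarrow> bool" where
  "le_B6 B6_0 j = True"
| "le_B6 B6_x j = (j \<in> {B6_x, B6_y, B6_1})"
| "le_B6 B6_y j = (j \<in> {B6_y, B6_1})"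
| "le_B6 B6_y' j = (j \<in> {B6_y', B6_x', B6_1})"
| "le_B6 B6_x' j = (j \<in> {B6_x', B6_1})"
| "le_B6 B6_1 j = (j = B6_1)"

lemma all_b6: "(\<forall>w. P w) \<longleftrightarrow> P B6_0 \<and> P B6_x \<and> P B6_y \<and> P B6_y' \<and> P B6_x' \<and> P B6_1"
  by (metis b6.exhaust)

lemma ex_b6: "(\<exists>w. P w) \<longleftrightarrow> P B6_0 \<or> P B6_x \<or> P B6_y \<or> P B6_y' \<or> P B6_x' \<or> P B6_1"
  by (metis b6.exhaust)

interpretation B6: hasse_presentation covers_B6 le_B6 neg6 B6_0 B6_1
  rewrites "alg_of covers_B6 neg6 B6_0 B6_1 = B6"
proof -
  show "hasse_presentation covers_B6 le_B6 neg6 B6_0 B6_1"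
  proof
    have "(UNIV :: b6 set) = {B6_0, B6_x, B6_y, B6_y', B6_x', B6_1}"
      using b6.exhaust by auto
    then show "finite (UNIV :: b6 set)"
      by (metis finite.emptyI finite_insert)
    show "le_B6 i k" if "le_B6 i j" "(j, k) \<in> covers_B6" for i j k
      using that by (cases i) (auto simp: covers_B6_def)
    show "\<exists>k. (i, k) \<in> covers_B6 \<and> k \<noteq> i \<and> le_B6 k j" if "le_B6 i j" "i \<noteq> j" for i j
      using that
      by (cases i; cases j) (simp_all add: covers_B6_def conj_disj_distribR ex_disj_distrib)
    show "\<exists>z. le_B6 z i \<and> le_B6 z j \<and> (\<forall>w. le_B6 w i \<and> le_B6 w j \<longrightarrow> le_B6 w z)" for i j
      by (cases i; cases j) (simp_all add: ex_b6 all_b6)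
    show "i = j" if "le_B6 i j" "le_B6 j i" for i j
      using that by (cases i; cases j) simp_all
    show "le_B6 (neg6 j) (neg6 i)" if "le_B6 i j" for i j
      using that by (cases i; cases j) simp_all
    show "le_B6 i i" "le_B6 B6_0 i" "neg6 (neg6 i) = i" for i
      by (cases i; simp)+
  qed simp
qed (simp add: B6_def covers_B6_def)

lemma meet_B6_incomparable:
  "meet B6 B6_x B6_y' = B6_0" "meet B6 B6_x B6_x' = B6_0" "meet B6 B6_y B6_y' = B6_0"
  "meet B6 B6_y B6_x' = B6_0"
  by (rule B6.meet_eqI; simp add: all_b6)+

lemmas meet_B6_incomparable_swap = meet_B6_incomparable[THEN trans[OF B6.meet_comm]]

lemma B6_not_leq_keys:
  "\<not> leq B6 i j \<Longrightarrow>
    \<exists>(p, q)\<in>{(B6_x, B6_y'), (B6_x, B6_x'), (B6_y, B6_x), (B6_y, B6_y'), (B6_y', B6_x),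
     (B6_y', B6_y), (B6_x', B6_x)}.
    leq B6 p i \<and> leq B6 j q \<or> leq B6 (neg B6 q) i \<and> leq B6 j (neg B6 p)"
  by (cases i; cases j) simp_all

definition covers_B8 :: "(b8 \<times> b8) set" where
  "covers_B8 = {(B8_0, B8_z'), (B8_z', B8_x), (B8_x, B8_y), (B8_y, B8_z),
                (B8_z', B8_y'), (B8_y', B8_x'), (B8_x', B8_z), (B8_z, B8_1)}"

fun le_B8 :: "b8 \<Rightarrow> b8 \<Rightarrow> bool" where
  "le_B8 B8_0 j = True"
| "le_B8 B8_z' j = (j \<noteq> B8_0)"
| "le_B8 B8_x j = (j \<in> {B8_x, B8_y, B8_z, B8_1})"
| "le_B8 B8_y j = (j \<in> {B8_y, B8_z, B8_1})"
| "le_B8 B8_y' j = (j \<in> {B8_y', B8_x', B8_z, B8_1})"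
| "le_B8 B8_x' j = (j \<in> {B8_x', B8_z, B8_1})"
| "le_B8 B8_z j = (j \<in> {B8_z, B8_1})"
| "le_B8 B8_1 j = (j = B8_1)"

lemma all_b8: "(\<forall>w. P w) \<longleftrightarrow> P B8_0 \<and> P B8_z' \<and> P B8_x \<and> P B8_y \<and> P B8_y' \<and> P B8_x' \<and> P B8_z \<and> P B8_1"
  by (metis b8.exhaust)

lemma ex_b8: "(\<exists>w. P w) \<longleftrightarrow> P B8_0 \<or> P B8_z' \<or> P B8_x \<or> P B8_y \<or> P B8_y' \<or> P B8_x' \<or> P B8_z \<or> P B8_1"
  by (metis b8.exhaust)

interpretation B8: hasse_presentation covers_B8 le_B8 neg8 B8_0 B8_1
  rewrites "alg_of covers_B8 neg8 B8_0 B8_1 = B8"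
proof -
  show "hasse_presentation covers_B8 le_B8 neg8 B8_0 B8_1"
  proof
    have "(UNIV :: b8 set) = {B8_0, B8_z', B8_x, B8_y, B8_y', B8_x', B8_z, B8_1}"
      using b8.exhaust by auto
    then show "finite (UNIV :: b8 set)"
      by (metis finite.emptyI finite_insert)
    show "le_B8 i k" if "le_B8 i j" "(j, k) \<in> covers_B8" for i j k
      using that by (cases i) (auto simp: covers_B8_def)
    show "\<exists>k. (i, k) \<in> covers_B8 \<and> k \<noteq> i \<and> le_B8 k j" if "le_B8 i j" "i \<noteq> j" for i j
      using that
      by (cases i; cases j) (simp_all add: covers_B8_def conj_disj_distribR ex_disj_distrib)
    show "\<exists>z. le_B8 z i \<and> le_B8 z j \<and> (\<forall>w. le_B8 w i \<and> le_B8 w j \<longrightarrow> le_B8 w z)" for i j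
      by (cases i; cases j) (simp_all add: ex_b8 all_b8)
    show "i = j" if "le_B8 i j" "le_B8 j i" for i j
      using that by (cases i; cases j) simp_all
    show "le_B8 (neg8 j) (neg8 i)" if "le_B8 i j" for i j
      using that by (cases i; cases j) simp_all
    show "le_B8 i i" "le_B8 B8_0 i" "neg8 (neg8 i) = i" for i
      by (cases i; simp)+
  qed simp
qed (simp add: B8_def covers_B8_def)

lemma meet_B8_incomparable:
  "meet B8 B8_x B8_y' = B8_z'" "meet B8 B8_x B8_x' = B8_z'" "meet B8 B8_y B8_y' = B8_z'"
  "meet B8 B8_y B8_x' = B8_z'"
  by (rule B8.meet_eqI; simp add: all_b8)+

lemmas meet_B8_incomparable_swap = meet_B8_incomparable[THEN trans[OF B8.meet_comm]]

lemma B8_not_leq_keys: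
  "\<not> leq B8 i j \<Longrightarrow>
    \<exists>(p, q)\<in>{(B8_z', B8_0), (B8_x, B8_0), (B8_x, B8_y'), (B8_x, B8_x'), (B8_y, B8_0),
     (B8_y, B8_x), (B8_y, B8_y'), (B8_y', B8_0), (B8_y', B8_x), (B8_y', B8_y),
     (B8_x', B8_0), (B8_x', B8_x), (B8_1, B8_0)}.
    leq B8 p i \<and> leq B8 j q \<or> leq B8 (neg B8 q) i \<and> leq B8 j (neg B8 p)"
  by (cases i; cases j) simp_all

definition covers_B8s :: "(b8s \<times> b8s) set" where
  "covers_B8s = {(S_0, S_x), (S_0, S_y), (S_x, S_z), (S_y, S_z'), (S_z, S_z'),
                 (S_z, S_y'), (S_z', S_x'), (S_y', S_1), (S_x', S_1)}"

fun le_B8s :: "b8s \<Rightarrow> b8s \<Rightarrow> bool" where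
  "le_B8s S_0 j = True"
| "le_B8s S_x j = (j \<in> {S_x, S_z, S_z', S_y', S_x', S_1})"
| "le_B8s S_y j = (j \<in> {S_y, S_z', S_x', S_1})"
| "le_B8s S_z j = (j \<in> {S_z, S_z', S_y', S_x', S_1})"
| "le_B8s S_z' j = (j \<in> {S_z', S_x', S_1})"
| "le_B8s S_y' j = (j \<in> {S_y', S_1})"
| "le_B8s S_x' j = (j \<in> {S_x', S_1})"
| "le_B8s S_1 j = (j = S_1)"

lemma all_b8s: "(\<forall>w. P w) \<longleftrightarrow> P S_0 \<and> P S_x \<and> P S_y \<and> P S_z \<and> P S_z' \<and> P S_y' \<and> P S_x' \<and> P S_1"
  by (metis b8s.exhaust)

lemma ex_b8s: "(\<exists>w. P w) \<longleftrightarrow> P S_0 \<or> P S_x \<or> P S_y \<or> P S_z \<or> P S_z' \<or> P S_y' \<or> P S_x' \<or> P S_1"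
  by (metis b8s.exhaust)

interpretation B8s: hasse_presentation covers_B8s le_B8s neg8s S_0 S_1
  rewrites "alg_of covers_B8s neg8s S_0 S_1 = B8s"
proof -
  show "hasse_presentation covers_B8s le_B8s neg8s S_0 S_1"
  proof
    have "(UNIV :: b8s set) = {S_0, S_x, S_y, S_z, S_z', S_y', S_x', S_1}"
      using b8s.exhaust by auto
    then show "finite (UNIV :: b8s set)"
      by (metis finite.emptyI finite_insert)
    show "le_B8s i k" if "le_B8s i j" "(j, k) \<in> covers_B8s" for i j k
      using that by (cases i) (auto simp: covers_B8s_def)
    show "\<exists>k. (i, k) \<in> covers_B8s \<and> k \<noteq> i \<and> le_B8s k j" if "le_B8s i j" "i \<noteq> j" for i j
      using that
      by (cases i; cases j) (simp_all add: covers_B8s_def conj_disj_distribR ex_disj_distrib)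
    show "\<exists>z. le_B8s z i \<and> le_B8s z j \<and> (\<forall>w. le_B8s w i \<and> le_B8s w j \<longrightarrow> le_B8s w z)" for i j
      by (cases i; cases j) (simp_all add: ex_b8s all_b8s)
    show "i = j" if "le_B8s i j" "le_B8s j i" for i j
      using that by (cases i; cases j) simp_all
    show "le_B8s (neg8s j) (neg8s i)" if "le_B8s i j" for i j
      using that by (cases i; cases j) simp_all
    show "le_B8s i i" "le_B8s S_0 i" "neg8s (neg8s i) = i" for i
      by (cases i; simp)+
  qed simp
qed (simp add: B8s_def covers_B8s_def)

lemma meet_B8s_incomparable:
  "meet B8s S_x S_y = S_0" "meet B8s S_y S_z = S_0" "meet B8s S_y S_y' = S_0"
  "meet B8s S_z' S_y' = S_z" "meet B8s S_y' S_x' = S_z"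
  by (rule B8s.meet_eqI; simp add: all_b8s)+

lemmas meet_B8s_incomparable_swap = meet_B8s_incomparable[THEN trans[OF B8s.meet_comm]]

lemma B8s_not_leq_keys:
  "\<not> leq B8s i j \<Longrightarrow>
    \<exists>(p, q)\<in>{(S_x, S_y), (S_y, S_x), (S_y, S_y'), (S_z, S_x), (S_z, S_y), (S_y', S_x),
     (S_y', S_y), (S_x', S_x)}.
    leq B8s p i \<and> leq B8s j q \<or> leq B8s (neg B8s q) i \<and> leq B8s j (neg B8s p)"
  by (cases i; cases j) simp_all

definition covers_B10 :: "(b10 \<times> b10) set" where
  "covers_B10 = {(T_0, T_y'), (T_0, T_m), (T_0, T_x), (T_y', T_a'), (T_m, T_a'),
                 (T_m, T_a), (T_x, T_a), (T_a', T_x'), (T_a', T_m'), (T_a, T_m'),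
                 (T_a, T_y), (T_x', T_1), (T_m', T_1), (T_y, T_1)}"

fun le_B10 :: "b10 \<Rightarrow> b10 \<Rightarrow> bool" where
  "le_B10 T_0 j = True"
| "le_B10 T_x j = (j \<in> {T_x, T_a, T_m', T_y, T_1})"
| "le_B10 T_y' j = (j \<in> {T_y', T_a', T_x', T_m', T_1})"
| "le_B10 T_m j = (j \<in> {T_m, T_a, T_a', T_x', T_m', T_y, T_1})"
| "le_B10 T_a j = (j \<in> {T_a, T_m', T_y, T_1})"
| "le_B10 T_a' j = (j \<in> {T_a', T_x', T_m', T_1})"
| "le_B10 T_x' j = (j \<in> {T_x', T_1})"
| "le_B10 T_y j = (j \<in> {T_y, T_1})"
| "le_B10 T_m' j = (j \<in> {T_m', T_1})"
| "le_B10 T_1 j = (j = T_1)"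

lemma all_b10:
  "(\<forall>w. P w) \<longleftrightarrow>
    P T_0 \<and> P T_x \<and> P T_y' \<and> P T_m \<and> P T_a \<and> P T_a' \<and> P T_x' \<and> P T_y \<and> P T_m' \<and> P T_1"
  by (metis b10.exhaust)

lemma ex_b10:
  "(\<exists>w. P w) \<longleftrightarrow>
    P T_0 \<or> P T_x \<or> P T_y' \<or> P T_m \<or> P T_a \<or> P T_a' \<or> P T_x' \<or> P T_y \<or> P T_m' \<or> P T_1"
  by (metis b10.exhaust)

interpretation B10: hasse_presentation covers_B10 le_B10 neg10 T_0 T_1
  rewrites "alg_of covers_B10 neg10 T_0 T_1 = B10"
proof -
  show "hasse_presentation covers_B10 le_B10 neg10 T_0 T_1"
  proof
    have "(UNIV :: b10 set) = {T_0, T_x, T_y', T_m, T_a, T_a', T_x', T_y, T_m', T_1}"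
      using b10.exhaust by auto
    then show "finite (UNIV :: b10 set)"
      by (metis finite.emptyI finite_insert)
    show "le_B10 i k" if "le_B10 i j" "(j, k) \<in> covers_B10" for i j k
      using that by (cases i) (auto simp: covers_B10_def)
    show "\<exists>k. (i, k) \<in> covers_B10 \<and> k \<noteq> i \<and> le_B10 k j" if "le_B10 i j" "i \<noteq> j" for i j
      using that
      by (cases i; cases j) (simp_all add: covers_B10_def conj_disj_distribR ex_disj_distrib)
    show "\<exists>z. le_B10 z i \<and> le_B10 z j \<and> (\<forall>w. le_B10 w i \<and> le_B10 w j \<longrightarrow> le_B10 w z)" for i j
      by (cases i; cases j) (simp_all add: ex_b10 all_b10)
    show "i = j" if "le_B10 i j" "le_B10 j i" for i j
      using that by (cases i; cases j) simp_all
    show "le_B10 (neg10 j) (neg10 i)" if "le_B10 i j" for i j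
      using that by (cases i; cases j) simp_all
    show "le_B10 i i" "le_B10 T_0 i" "neg10 (neg10 i) = i" for i
      by (cases i; simp)+
  qed simp
qed (simp add: B10_def covers_B10_def)

lemma meet_B10_incomparable:
  "meet B10 T_x T_y' = T_0" "meet B10 T_x T_m = T_0" "meet B10 T_x T_a' = T_0"
  "meet B10 T_x T_x' = T_0" "meet B10 T_y' T_m = T_0" "meet B10 T_y' T_a = T_0"
  "meet B10 T_y' T_y = T_0" "meet B10 T_a T_a' = T_m" "meet B10 T_a T_x' = T_m"
  "meet B10 T_a' T_y = T_m" "meet B10 T_x' T_y = T_m" "meet B10 T_x' T_m' = T_a'"
  "meet B10 T_y T_m' = T_a"
  by (rule B10.meet_eqI; simp add: all_b10)+

lemmas meet_B10_incomparable_swap = meet_B10_incomparable[THEN trans[OF B10.meet_comm]]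

lemma B10_not_leq_keys:
  "\<not> leq B10 i j \<Longrightarrow>
    \<exists>(p, q)\<in>{(T_x, T_y'), (T_x, T_x'), (T_y', T_x), (T_y', T_y), (T_m, T_x), (T_m, T_y'),
     (T_x', T_x), (T_x', T_y'), (T_y, T_y')}.
    leq B10 p i \<and> leq B10 j q \<or> leq B10 (neg B10 q) i \<and> leq B10 j (neg B10 p)"
  by (cases i; cases j) simp_all

lemma B6_not_SP1: "\<not> SP1 B6"
  using SP1D[of B6 B6_x B6_y] by (auto simp: meet_B6_incomparable meet_B6_incomparable_swap)

lemma B8_not_SP1: "\<not> SP1 B8"
  using SP1D[of B8 B8_x B8_y] by (auto simp: meet_B8_incomparable meet_B8_incomparable_swap)

lemma B8s_not_SP2: "\<not> SP2 B8s"
  using SP2D[of B8s S_x S_y'] by (auto simp: meet_B8s_incomparable meet_B8s_incomparable_swap)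

lemma B10_not_SP2: "\<not> SP2 B10"
  using SP2D[of B10 T_x T_y] by (auto simp: meet_B10_incomparable meet_B10_incomparable_swap)

section \<open>Subalgebras and quotients from families of intervals\<close>

context involution_lattice
begin

lemma monotone_along_rtrancl:
  assumes "(i, j) \<in> C\<^sup>*" and cover: "\<And>i j. (i, j) \<in> C \<Longrightarrow> f i \<preceq> f j"
    and closed: "\<And>i. f i \<in> carrier A"
  shows "f i \<preceq> f j"
  using assms(1)
proof induction
  case (step j k)
  then show ?case
    using le_trans[OF _ cover[OF step(2)]] closed by blast
qed (simp add: closed)

text \<open>\<open>K\<close> lists the minimal failures of the order of \<open>T\<close> up to the symmetry
  \<open>(p, q) \<mapsto> (q', p')\<close>; separation of the intervals only has to be checked there.\<close>

lemma separated_if_keys: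
  fixes T :: "'b pkl"
  assumes T: "involution_lattice T" "carrier T = UNIV"
    and closed: "\<And>i. lo i \<in> carrier A"
    and mono: "\<And>i j. leq T i j \<Longrightarrow> lo i \<preceq> lo j"
    and keys: "\<exists>(p, q)\<in>K. leq T p i \<and> leq T j q \<or> leq T (neg T q) i \<and> leq T j (neg T p)"
    and key_separated: "\<And>p q. (p, q) \<in> K \<Longrightarrow> \<not> lo p \<preceq> \<sim>lo (neg T q)"
  shows "\<not> lo i \<preceq> \<sim>lo (neg T j)"
proof
  assume ij: "lo i \<preceq> \<sim>lo (neg T j)"
  have hi_mono: "\<sim>lo (neg T j) \<preceq> \<sim>lo (neg T q)" if "leq T j q" for j q
    using mono involution_lattice.neg_antitone[OF T(1)] that T(2) closed by simp
  obtain p q where "(p, q) \<in> K"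
    and "leq T p i \<and> leq T j q \<or> leq T (neg T q) i \<and> leq T j (neg T p)"
    using keys by blast
  then show False
  proof (elim disjE conjE)
    assume "leq T p i" "leq T j q"
    then have "lo p \<preceq> \<sim>lo (neg T q)"
      using ij mono hi_mono closed by (meson le_trans neg_closed)
    with \<open>(p, q) \<in> K\<close> show False
      using key_separated by blast
  next
    assume "leq T (neg T q) i" "leq T j (neg T p)"
    then have "lo (neg T q) \<preceq> \<sim>lo (neg T (neg T p))"
      using ij mono hi_mono closed by (meson le_trans neg_closed)
    then have "lo p \<preceq> \<sim>lo (neg T q)"
      using closed involution_lattice.neg_neg[OF T(1)] T(2) by (simp add: le_neg_iff)
    with \<open>(p, q) \<in> K\<close> show False
      using key_separated by blast
  qed
qed

end

locale interval_family = involution_lattice +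
  fixes T :: "'b pkl" and lo :: "'b \<Rightarrow> 'a"
  assumes T_lattice: "involution_lattice T"
    and T_carrier: "carrier T = UNIV"
    and lo_closed [simp]: "lo i \<in> carrier A"
    and lo_bot: "lo (bot T) = \<zero>"
    and lo_mono: "leq T i j \<Longrightarrow> lo i \<preceq> lo j"
    and lo_le_hi: "lo i \<preceq> \<sim>lo (neg T i)"
    and hi_meet_incomparable: "\<not> leq T i j \<Longrightarrow> \<not> leq T j i \<Longrightarrow>
      \<sim>lo (neg T i) \<^bold>\<and> \<sim>lo (neg T j) \<preceq> \<sim>lo (neg T (meet T i j))"
    and separated: "\<not> leq T i j \<Longrightarrow> \<not> lo i \<preceq> \<sim>lo (neg T j)"
begin

definition hi :: "'b \<Rightarrow> 'a" where
  "hi i = \<sim>lo (neg T i)"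

definition interval :: "'b \<Rightarrow> 'a set" where
  "interval i = {u \<in> carrier A. lo i \<preceq> u \<and> u \<preceq> hi i}"

definition support :: "'a set" where
  "support = (\<Union>i. interval i)"

definition index :: "'a \<Rightarrow> 'b" where
  "index u = (THE i. u \<in> interval i)"

lemma T_meet_comm: "meet T i j = meet T j i"
  and T_meet_le: "leq T (meet T i j) i"
  and T_le_antisym: "leq T i j \<Longrightarrow> leq T j i \<Longrightarrow> i = j"
  and T_neg_neg: "neg T (neg T i) = i"
  and T_join: "join T i j = neg T (meet T (neg T i) (neg T j))"
  and T_top: "top T = neg T (bot T)"
  using involution_lattice.meet_comm[OF T_lattice] involution_lattice.meet_le1[OF T_lattice]
    involution_lattice.le_antisym[OF T_lattice] involution_lattice.neg_neg[OF T_lattice]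
    involution_lattice.join_eq_neg_meet[OF T_lattice] involution_lattice.neg_bot[OF T_lattice]
  by (simp_all add: T_carrier)

lemma hi_closed [simp]: "hi i \<in> carrier A"
  by (simp add: hi_def)

lemma hi_meet: "hi i \<^bold>\<and> hi j \<preceq> hi (meet T i j)"
proof (cases "leq T i j \<or> leq T j i")
  case True
  then have "meet T i j = i \<or> meet T i j = j"
    using T_meet_comm by (auto simp: leq_def)
  then show ?thesis
    by auto
qed (simp add: hi_def hi_meet_incomparable)

lemma interval_unique: "u \<in> interval i \<Longrightarrow> u \<in> interval j \<Longrightarrow> i = j"
  unfolding interval_def hi_def
  by (metis (mono_tags, lifting) T_le_antisym le_trans lo_closed mem_Collect_eq neg_closed
      separated)

lemma index_eq: "u \<in> interval i \<Longrightarrow> index u = i"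
  unfolding index_def using interval_unique by blast

lemma lo_in_interval: "lo i \<in> interval i"
  using lo_le_hi by (simp add: interval_def hi_def)

lemma meet_in_interval: "u \<in> interval i \<Longrightarrow> v \<in> interval j \<Longrightarrow> u \<^bold>\<and> v \<in> interval (meet T i j)"
proof -
  assume u: "u \<in> interval i" and v: "v \<in> interval j"
  then have uv: "u \<in> carrier A" "v \<in> carrier A"
    by (simp_all add: interval_def)
  have "lo (meet T i j) \<preceq> lo i" "lo (meet T i j) \<preceq> lo j"
    using lo_mono T_meet_le T_meet_comm by metis+
  then have "lo (meet T i j) \<preceq> u \<^bold>\<and> v"
    using u v uv le_trans by (simp add: interval_def)
  moreover have "u \<^bold>\<and> v \<preceq> hi (meet T i j)"
    using u v uv hi_meet le_trans[of "u \<^bold>\<and> v" "hi i \<^bold>\<and> hi j"]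
    by (simp add: interval_def le_meetI1 le_meetI2)
  ultimately show ?thesis
    using uv by (simp add: interval_def)
qed

lemma neg_in_interval: "u \<in> interval i \<Longrightarrow> \<sim>u \<in> interval (neg T i)"
  by (auto simp: interval_def hi_def T_neg_neg le_neg_iff neg_le_iff)

lemma join_in_interval: "u \<in> interval i \<Longrightarrow> v \<in> interval j \<Longrightarrow> u \<^bold>\<or> v \<in> interval (join T i j)"
proof -
  assume "u \<in> interval i" "v \<in> interval j"
  then have "\<sim>(\<sim>u \<^bold>\<and> \<sim>v) \<in> interval (neg T (meet T (neg T i) (neg T j)))"
    by (intro neg_in_interval meet_in_interval)
  then show ?thesis
    using \<open>u \<in> interval i\<close> \<open>v \<in> interval j\<close> by (simp add: interval_def T_join)
qed

lemma bot_in_interval: "\<zero> \<in> interval (bot T)"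
  using lo_bot by (simp add: interval_def)

lemma top_in_interval: "\<one> \<in> interval (top T)"
  using neg_in_interval[OF bot_in_interval] by (simp add: T_top)

lemma index_in_interval: "u \<in> support \<Longrightarrow> u \<in> interval (index u)"
  unfolding support_def using index_eq by blast

lemma support_closed:
  assumes "u \<in> support" "v \<in> support"
  shows "u \<^bold>\<and> v \<in> support" "u \<^bold>\<or> v \<in> support" "\<sim>u \<in> support"
proof -
  note u = index_in_interval[OF assms(1)] and v = index_in_interval[OF assms(2)]
  show "u \<^bold>\<and> v \<in> support"
    using meet_in_interval[OF u v] by (auto simp: support_def)
  show "u \<^bold>\<or> v \<in> support"
    using join_in_interval[OF u v] by (auto simp: support_def)
  show "\<sim>u \<in> support"
    using neg_in_interval[OF u] by (auto simp: support_def)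
qed

lemma support_subalgebra: "subalgebra support A"
proof -
  have "support \<subseteq> carrier A" "\<zero> \<in> support" "\<one> \<in> support"
    using bot_in_interval top_in_interval by (auto simp: support_def interval_def)
  then show ?thesis
    using support_closed by (simp add: subalgebra_def closed_ops_def)
qed

lemma index_hom:
  assumes "u \<in> support" "v \<in> support"
  shows "index (u \<^bold>\<and> v) = meet T (index u) (index v)"
    and "index (u \<^bold>\<or> v) = join T (index u) (index v)"
    and "index (\<sim>u) = neg T (index u)"
proof -
  note u = index_in_interval[OF assms(1)] and v = index_in_interval[OF assms(2)]
  show "index (u \<^bold>\<and> v) = meet T (index u) (index v)"
    using meet_in_interval[OF u v] by (rule index_eq)
  show "index (u \<^bold>\<or> v) = join T (index u) (index v)"
    using join_in_interval[OF u v] by (rule index_eq)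
  show "index (\<sim>u) = neg T (index u)"
    using neg_in_interval[OF u] by (rule index_eq)
qed

lemma index_epimorphism: "epimorphism (restrict_alg A support) T index"
proof -
  have "i \<in> index ` support" for i
  proof -
    have "lo i \<in> support"
      using lo_in_interval by (auto simp: support_def)
    then show ?thesis
      using index_eq[OF lo_in_interval] by (metis imageI)
  qed
  then have "index ` support = carrier T"
    by (auto simp: T_carrier)
  moreover have "index \<zero> = bot T" "index \<one> = top T"
    using index_eq bot_in_interval top_in_interval by simp_all
  ultimately show ?thesis
    using index_hom by (simp add: epimorphism_def restrict_alg_def)
qed

lemma isomorphic_quotient:
  "\<exists>B \<theta>. subalgebra B A \<and> congruence (restrict_alg A B) \<theta> \<and>
    isomorphic (quotient_alg (restrict_alg A B) \<theta>) T"
proof -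
  have "closed_ops (restrict_alg A support) (carrier (restrict_alg A support))"
    using support_subalgebra by (simp add: subalgebra_def closed_ops_def restrict_alg_def)
  then show ?thesis
    using support_subalgebra congruence_hom_kernel iso_quotient_hom_kernel index_epimorphism
    unfolding isomorphic_def by blast
qed

lemma isomorphic_subalgebra:
  assumes "\<And>i. hi i = lo i"
  shows "\<exists>B. subalgebra B A \<and> isomorphic (restrict_alg A B) T"
proof -
  have "u = lo (index u)" if "u \<in> support" for u
    using index_in_interval[OF that] assms le_antisym by (simp add: interval_def)
  then have "inj_on index support"
    by (metis inj_onI)
  then have "iso (restrict_alg A support) T index"
    using iso_if_epimorphism_inj_on[OF index_epimorphism] by (simp add: restrict_alg_def)
  then show ?thesis
    using support_subalgebra unfolding isomorphic_def by blast
qed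

end

section \<open>Failures of (SP1) and (SP2)\<close>

locale comparable_pair = pseudo_kleene_lattice +
  fixes x y :: 'a
  assumes x_closed [simp]: "x \<in> carrier A" and y_closed [simp]: "y \<in> carrier A"
    and x_le_y: "x \<preceq> y"
begin

definition k :: 'a where
  "k = x \<^bold>\<and> \<sim>x \<^bold>\<or> y \<^bold>\<and> \<sim>y"

lemma k_closed [simp]: "k \<in> carrier A"
  by (simp add: k_def)

lemma neg_k: "\<sim>k = (\<sim>x \<^bold>\<or> x) \<^bold>\<and> (\<sim>y \<^bold>\<or> y)"
  by (simp add: k_def)

lemma k_le_neg_k: "k \<preceq> \<sim>k"
  by (simp add: neg_k k_def kleene_neg_join)

lemma neg_y_le_neg_x: "\<sim>y \<preceq> \<sim>x"
  using x_le_y by simp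

lemma k_le_y: "k \<preceq> y"
  using x_le_y by (simp add: k_def le_meetI1 le_trans[of _ x y])

definition a :: 'a where
  "a = x \<^bold>\<or> y \<^bold>\<and> \<sim>y"

definition b :: 'a where
  "b = y \<^bold>\<and> (x \<^bold>\<or> \<sim>x)"

lemma a_closed [simp]: "a \<in> carrier A" and b_closed [simp]: "b \<in> carrier A"
  by (simp_all add: a_def b_def)

lemma k_le_a: "k \<preceq> a"
  by (simp add: k_def a_def le_joinI1 le_meetI1)

lemma a_le_b: "a \<preceq> b"
  using x_le_y kleene[of y x] by (simp add: a_def b_def le_meetI1)

lemma b_le_neg_k: "b \<preceq> \<sim>k"
proof -
  have "b \<preceq> x \<^bold>\<or> \<sim>x" "b \<preceq> y"
    by (simp_all add: b_def)
  then show ?thesis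
    by (simp add: neg_k join_comm le_trans[of b y])
qed

lemma b_meet_neg_a_le: "b \<^bold>\<and> \<sim>a \<preceq> \<sim>x \<^bold>\<and> y"
  by (simp add: a_def b_def le_meetI1 le_meetI2)

end

locale SP1_failure = comparable_pair +
  assumes SP1_premise: "\<sim>x \<^bold>\<and> y = k" and SP1_fails: "b \<noteq> a"
begin

lemma neg_b_le_neg_a: "\<sim>b \<preceq> \<sim>a"
  using a_le_b by simp

text \<open>Any two incomparable elements among \<open>a\<close>, \<open>b\<close>, \<open>\<sim>a\<close>, \<open>\<sim>b\<close> meet below
  \<open>b \<^bold>\<and> \<sim>a\<close>, which the premise of (SP1) puts below \<open>k\<close>.\<close>
lemma meets_le_k:
  "b \<^bold>\<and> \<sim>a \<preceq> k" "b \<^bold>\<and> \<sim>b \<preceq> k" "a \<^bold>\<and> \<sim>a \<preceq> k" "a \<^bold>\<and> \<sim>b \<preceq> k"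
  "\<sim>a \<^bold>\<and> b \<preceq> k" "\<sim>b \<^bold>\<and> b \<preceq> k" "\<sim>a \<^bold>\<and> a \<preceq> k" "\<sim>b \<^bold>\<and> a \<preceq> k"
proof -
  have ba: "b \<^bold>\<and> \<sim>a \<preceq> k"
    using b_meet_neg_a_le SP1_premise by simp
  show "b \<^bold>\<and> \<sim>a \<preceq> k" "b \<^bold>\<and> \<sim>b \<preceq> k" "a \<^bold>\<and> \<sim>a \<preceq> k" "a \<^bold>\<and> \<sim>b \<preceq> k"
    "\<sim>a \<^bold>\<and> b \<preceq> k" "\<sim>b \<^bold>\<and> b \<preceq> k" "\<sim>a \<^bold>\<and> a \<preceq> k" "\<sim>b \<^bold>\<and> a \<preceq> k"
    using le_trans[OF _ ba] a_le_b neg_b_le_neg_a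
    by (simp_all add: le_meetI1 le_meetI2 meet_comm[of "\<sim>a"] meet_comm[of "\<sim>b"])
qed

lemma not_b_le_a: "\<not> b \<preceq> a"
  using SP1_fails a_le_b le_antisym by auto

lemma not_a_le_k: "\<not> a \<preceq> k"
proof
  assume "a \<preceq> k"
  then have "b \<preceq> \<sim>a"
    using b_le_neg_k le_trans[of b "\<sim>k" "\<sim>a"] by simp
  then have "b \<preceq> k"
    using meets_le_k(1) le_trans[of b "b \<^bold>\<and> \<sim>a" k] by simp
  then show False
    using not_b_le_a k_le_a le_trans[of b k a] by simp
qed

lemma not_neg_a_le_k: "\<not> \<sim>a \<preceq> k"
proof
  assume "\<sim>a \<preceq> k"
  then have "b \<preceq> a"
    using b_le_neg_k le_trans[of b "\<sim>k" a] by (simp add: neg_le_iff)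
  then show False
    using not_b_le_a by simp
qed

lemma not_neg_b_le_a: "\<not> \<sim>b \<preceq> a"
proof
  assume "\<sim>b \<preceq> a"
  then have "\<sim>a \<preceq> b \<^bold>\<and> \<sim>a"
    by (simp add: neg_le_iff)
  then show False
    using not_neg_a_le_k meets_le_k(1) le_trans[of "\<sim>a" "b \<^bold>\<and> \<sim>a" k] by simp
qed

lemma SP1_separation:
  "\<not> a \<preceq> \<sim>b" "\<not> a \<preceq> \<sim>a" "\<not> b \<preceq> \<sim>b" "\<not> \<sim>b \<preceq> b" "\<not> \<sim>a \<preceq> a" "\<not> \<sim>b \<preceq> k"
proof -
  show "\<not> a \<preceq> \<sim>b"
    using not_a_le_k a_le_b meets_le_k(4) le_trans[of a "a \<^bold>\<and> \<sim>b" k] by auto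
  show "\<not> a \<preceq> \<sim>a"
    using not_a_le_k meets_le_k(3) le_trans[of a "a \<^bold>\<and> \<sim>a" k] by auto
  show "\<not> b \<preceq> \<sim>b"
    using not_b_le_a k_le_a meets_le_k(2) le_trans[of b "b \<^bold>\<and> \<sim>b" k] le_trans[of b k a] by auto
  show "\<not> \<sim>b \<preceq> b"
    using not_neg_b_le_a k_le_a meets_le_k(2) le_trans[of "\<sim>b" "b \<^bold>\<and> \<sim>b" k]
      le_trans[of "\<sim>b" k a] by (auto simp: meet_comm)
  show "\<not> \<sim>a \<preceq> a"
    using not_neg_b_le_a a_le_b le_trans[of "\<sim>a" a b] by (auto simp: neg_le_iff)
  show "\<not> \<sim>b \<preceq> k"
    using not_neg_b_le_a k_le_a le_trans[of "\<sim>b" k a] by auto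
qed

lemma subalgebra_B8:
  assumes "k \<noteq> \<zero>"
  shows "\<exists>B. subalgebra B A \<and> isomorphic (restrict_alg A B) B8"
proof -
  define lo where "lo i = (case i of B8_0 \<Rightarrow> \<zero> | B8_z' \<Rightarrow> k | B8_x \<Rightarrow> a | B8_y \<Rightarrow> b
    | B8_y' \<Rightarrow> \<sim>b | B8_x' \<Rightarrow> \<sim>a | B8_z \<Rightarrow> \<sim>k | B8_1 \<Rightarrow> \<one>)" for i
  have top_ne_bot: "\<one> \<noteq> \<zero>"
    using assms le_top[OF k_closed] le_bot_iff[OF k_closed] by metis
  have closed: "lo i \<in> carrier A" for i
    by (cases i) (simp_all add: lo_def)
  have self_dual: "\<sim>lo (neg8 i) = lo i" for i
    by (cases i) (simp_all add: lo_def)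
  have mono: "lo i \<preceq> lo j" if "leq B8 i j" for i j
    using B8.leq_imp_rtrancl[OF that] _ closed
  proof (rule monotone_along_rtrancl)
    show "lo i \<preceq> lo j" if "(i, j) \<in> covers_B8" for i j
      using that k_le_a a_le_b b_le_neg_k neg_b_le_neg_a
      by (auto simp: covers_B8_def lo_def le_neg_iff[of k b])
  qed
  have "interval_family A B8 lo"
  proof (rule interval_family.intro[OF involution_lattice_axioms interval_family_axioms.intro])
    show "involution_lattice B8" "carrier B8 = UNIV" "lo (bot B8) = \<zero>"
      by (simp_all add: B8.involution_lattice lo_def)
    show "lo i \<in> carrier A" "lo i \<preceq> \<sim>lo (neg B8 i)" for i
      by (simp_all add: closed self_dual)
    show "lo i \<preceq> lo j" if "leq B8 i j" for i j
      using that by (rule mono)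
    show "\<sim>lo (neg B8 i) \<^bold>\<and> \<sim>lo (neg B8 j) \<preceq> \<sim>lo (neg B8 (meet B8 i j))"
      if "\<not> leq B8 i j" "\<not> leq B8 j i" for i j
      using that meets_le_k unfolding B8.alg_of_simps self_dual
      by (cases i; cases j) (simp_all add: lo_def meet_B8_incomparable meet_B8_incomparable_swap
)
    show "\<not> lo i \<preceq> \<sim>lo (neg B8 j)" if "\<not> leq B8 i j" for i j
      using B8.involution_lattice _ closed mono B8_not_leq_keys[OF that]
    proof (rule separated_if_keys)
      show "\<not> lo p \<preceq> \<sim>lo (neg B8 q)" if "(p, q) \<in> {(B8_z', B8_0), (B8_x, B8_0), (B8_x, B8_y'),
        (B8_x, B8_x'), (B8_y, B8_0), (B8_y, B8_x), (B8_y, B8_y'), (B8_y', B8_0), (B8_y', B8_x),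
        (B8_y', B8_y), (B8_x', B8_0), (B8_x', B8_x), (B8_1, B8_0)}" for p q
        using that assms top_ne_bot k_le_a not_a_le_k not_b_le_a not_neg_a_le_k not_neg_b_le_a
          SP1_separation
        unfolding B8.alg_of_simps self_dual by (auto simp: lo_def)
    qed simp
  qed
  then show ?thesis
    using self_dual by (simp add: interval_family.isomorphic_subalgebra interval_family.hi_def)
qed

lemma subalgebra_B6:
  assumes "k = \<zero>"
  shows "\<exists>B. subalgebra B A \<and> isomorphic (restrict_alg A B) B6"
proof -
  define lo where "lo i = (case i of B6_0 \<Rightarrow> \<zero> | B6_x \<Rightarrow> a | B6_y \<Rightarrow> b
    | B6_y' \<Rightarrow> \<sim>b | B6_x' \<Rightarrow> \<sim>a | B6_1 \<Rightarrow> \<one>)" for i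
  have closed: "lo i \<in> carrier A" for i
    by (cases i) (simp_all add: lo_def)
  have self_dual: "\<sim>lo (neg6 i) = lo i" for i
    by (cases i) (simp_all add: lo_def)
  have mono: "lo i \<preceq> lo j" if "leq B6 i j" for i j
    using B6.leq_imp_rtrancl[OF that] _ closed
  proof (rule monotone_along_rtrancl)
    show "lo i \<preceq> lo j" if "(i, j) \<in> covers_B6" for i j
      using that a_le_b neg_b_le_neg_a by (auto simp: covers_B6_def lo_def)
  qed
  have "interval_family A B6 lo"
  proof (rule interval_family.intro[OF involution_lattice_axioms interval_family_axioms.intro])
    show "involution_lattice B6" "carrier B6 = UNIV" "lo (bot B6) = \<zero>"
      by (simp_all add: B6.involution_lattice lo_def)
    show "lo i \<in> carrier A" "lo i \<preceq> \<sim>lo (neg B6 i)" for i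
      by (simp_all add: closed self_dual)
    show "lo i \<preceq> lo j" if "leq B6 i j" for i j
      using that by (rule mono)
    show "\<sim>lo (neg B6 i) \<^bold>\<and> \<sim>lo (neg B6 j) \<preceq> \<sim>lo (neg B6 (meet B6 i j))"
      if "\<not> leq B6 i j" "\<not> leq B6 j i" for i j
      using that meets_le_k assms unfolding B6.alg_of_simps self_dual
      by (cases i; cases j) (simp_all add: lo_def meet_B6_incomparable meet_B6_incomparable_swap)
    show "\<not> lo i \<preceq> \<sim>lo (neg B6 j)" if "\<not> leq B6 i j" for i j
      using B6.involution_lattice _ closed mono B6_not_leq_keys[OF that]
    proof (rule separated_if_keys)
      show "\<not> lo p \<preceq> \<sim>lo (neg B6 q)" if "(p, q) \<in> {(B6_x, B6_y'), (B6_x, B6_x'), (B6_y, B6_x),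
        (B6_y, B6_y'), (B6_y', B6_x), (B6_y', B6_y), (B6_x', B6_x)}" for p q
        using that not_b_le_a not_neg_b_le_a SP1_separation
        unfolding B6.alg_of_simps self_dual by (auto simp: lo_def)
    qed simp
  qed
  then show ?thesis
    using self_dual by (simp add: interval_family.isomorphic_subalgebra interval_family.hi_def)
qed

lemma subalgebra_B6_or_B8:
  "(\<exists>B. subalgebra B A \<and> isomorphic (restrict_alg A B) B6) \<or>
   (\<exists>B. subalgebra B A \<and> isomorphic (restrict_alg A B) B8)"
  using subalgebra_B6 subalgebra_B8 by blast

end

context comparable_pair
begin

lemma y_meet_neg_y_le_k: "y \<^bold>\<and> \<sim>y \<preceq> k"
  by (simp add: k_def)

lemma neg_y_le_neg_k: "\<sim>y \<preceq> \<sim>k"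
  using k_le_y by simp

definition P :: 'a where
  "P = k \<^bold>\<or> \<sim>y"

definition W :: 'a where
  "W = \<sim>P \<^bold>\<and> P"

lemma P_closed [simp]: "P \<in> carrier A" and W_closed [simp]: "W \<in> carrier A"
  by (simp_all add: P_def W_def)

lemma neg_P: "\<sim>P = \<sim>k \<^bold>\<and> y"
  by (simp add: P_def)

lemma W_bounds: "k \<preceq> W" "W \<preceq> y" "W \<preceq> P" "W \<preceq> \<sim>P"
  using k_le_neg_k k_le_y by (simp_all add: W_def neg_P P_def le_meetI1 le_meetI2)

lemma B8s_separation:
  assumes "W \<noteq> k"
  shows "\<not> W \<preceq> k" "\<not> W \<preceq> \<sim>y" "\<not> k \<preceq> \<sim>y" "\<not> \<sim>y \<preceq> k" "\<not> \<sim>y \<preceq> y"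
    and "\<not> y \<preceq> k" "\<not> y \<preceq> \<sim>y" "\<not> \<sim>k \<preceq> k"
proof -
  show nWk: "\<not> W \<preceq> k"
    using assms W_bounds(1) le_antisym by auto
  show nWy: "\<not> W \<preceq> \<sim>y"
    using nWk W_bounds(2) y_meet_neg_y_le_k le_trans[of W "y \<^bold>\<and> \<sim>y" k] by auto
  show nky: "\<not> k \<preceq> \<sim>y"
    using nWy W_bounds(3) le_trans[of W P "\<sim>y"] by (auto simp: P_def)
  show nyk: "\<not> \<sim>y \<preceq> k"
    using nWk W_bounds(3) le_trans[of W P k] by (auto simp: P_def)
  show "\<not> \<sim>y \<preceq> y"
    using nyk y_meet_neg_y_le_k le_trans[of "\<sim>y" "y \<^bold>\<and> \<sim>y" k] by (auto simp: meet_comm)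
  show nyk': "\<not> y \<preceq> k"
    using nky k_le_neg_k le_trans[of k "\<sim>k" "\<sim>y"] by auto
  show "\<not> y \<preceq> \<sim>y"
    using nyk' y_meet_neg_y_le_k le_trans[of y "y \<^bold>\<and> \<sim>y" k] by auto
  show "\<not> \<sim>k \<preceq> k"
    using nyk neg_y_le_neg_k le_trans[of "\<sim>y" "\<sim>k" k] by auto
qed

lemma quotient_B8s:
  assumes "W \<noteq> k"
  shows "\<exists>B \<theta>. subalgebra B A \<and> congruence (restrict_alg A B) \<theta> \<and>
    isomorphic (quotient_alg (restrict_alg A B) \<theta>) B8s"
proof -
  define lo where "lo i = (case i of S_0 \<Rightarrow> \<zero> | S_x \<Rightarrow> k | S_y \<Rightarrow> \<sim>y | S_z \<Rightarrow> W | S_z' \<Rightarrow> P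
    | S_y' \<Rightarrow> y | S_x' \<Rightarrow> \<sim>k | S_1 \<Rightarrow> \<sim>k \<^bold>\<or> y)" for i
  have closed: "lo i \<in> carrier A" for i
    by (cases i) (simp_all add: lo_def)
  have mono: "lo i \<preceq> lo j" if "leq B8s i j" for i j
    using B8s.leq_imp_rtrancl[OF that] _ closed
  proof (rule monotone_along_rtrancl)
    show "lo i \<preceq> lo j" if "(i, j) \<in> covers_B8s" for i j
      using that W_bounds k_le_neg_k neg_y_le_neg_k
      by (auto simp: covers_B8s_def lo_def P_def le_joinI1 le_joinI2)
  qed
  have "interval_family A B8s lo"
  proof (rule interval_family.intro[OF involution_lattice_axioms interval_family_axioms.intro])
    show "involution_lattice B8s" "carrier B8s = UNIV" "lo (bot B8s) = \<zero>"
      by (simp_all add: B8s.involution_lattice lo_def)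
    show "lo i \<in> carrier A" for i
      by (rule closed)
    show "lo i \<preceq> \<sim>lo (neg B8s i)" for i
      using W_bounds by (cases i) (simp_all add: lo_def W_def)
    show "lo i \<preceq> lo j" if "leq B8s i j" for i j
      using that by (rule mono)
    have "\<sim>y \<^bold>\<and> (\<sim>k \<^bold>\<and> y) \<preceq> k" "\<sim>k \<^bold>\<and> y \<^bold>\<and> \<sim>y \<preceq> k"
      using y_meet_neg_y_le_k
      by (simp_all add: le_meetI1 le_meetI2 le_trans[of _ "y \<^bold>\<and> \<sim>y" k])
    then show "\<sim>lo (neg B8s i) \<^bold>\<and> \<sim>lo (neg B8s j) \<preceq> \<sim>lo (neg B8s (meet B8s i j))"
      if "\<not> leq B8s i j" "\<not> leq B8s j i" for i j
      using that y_meet_neg_y_le_k k_le_neg_k neg_y_le_neg_k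
      by (cases i; cases j) (simp_all add: lo_def meet_B8s_incomparable meet_B8s_incomparable_swap
          W_def neg_P P_def le_meetI1 le_meetI2 meet_comm[of y])
    show "\<not> lo i \<preceq> \<sim>lo (neg B8s j)" if "\<not> leq B8s i j" for i j
      using B8s.involution_lattice _ closed mono B8s_not_leq_keys[OF that]
    proof (rule separated_if_keys)
      show "\<not> lo p \<preceq> \<sim>lo (neg B8s q)" if "(p, q) \<in> {(S_x, S_y), (S_y, S_x), (S_y, S_y'), (S_z, S_x),
        (S_z, S_y), (S_y', S_x), (S_y', S_y), (S_x', S_x)}" for p q
        using that B8s_separation[OF assms] by (auto simp: lo_def)
    qed simp
  qed
  then show ?thesis
    by (rule interval_family.isomorphic_quotient)
qed

definition t :: 'a where
  "t = \<sim>x \<^bold>\<and> y"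

definition c :: 'a where
  "c = t \<^bold>\<and> \<sim>t"

lemma t_closed [simp]: "t \<in> carrier A" and c_closed [simp]: "c \<in> carrier A"
  by (simp_all add: t_def c_def)

lemma neg_t: "\<sim>t = x \<^bold>\<or> \<sim>y"
  by (simp add: t_def)

lemma k_le_neg_x: "k \<preceq> \<sim>x"
  using neg_y_le_neg_x by (simp add: k_def le_meetI2 le_trans[of _ "\<sim>y" "\<sim>x"])

lemma k_le_t: "k \<preceq> t"
  using k_le_neg_x k_le_y by (simp add: t_def)

lemma k_le_neg_t: "k \<preceq> \<sim>t"
  by (simp add: neg_t k_def le_joinI1 le_joinI2)

lemma k_le_c: "k \<preceq> c"
  using k_le_t k_le_neg_t by (simp add: c_def)

lemma c_le_neg_c: "c \<preceq> \<sim>c"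
  by (simp add: c_def le_joinI1 le_joinI2 le_meetI1 le_meetI2)

lemma c_le_t: "c \<preceq> t"
  by (simp add: c_def)

lemma c_le_neg_t: "c \<preceq> \<sim>t"
  unfolding c_def by (rule meet_le2) simp_all

lemma c_le_neg_x: "c \<preceq> \<sim>x" and c_le_y: "c \<preceq> y"
proof -
  have "t \<preceq> \<sim>x" "t \<preceq> y"
    by (simp_all add: t_def)
  then show "c \<preceq> \<sim>x" "c \<preceq> y"
    using le_trans[OF c_le_t] by simp_all
qed

lemma c_le_neg_k: "c \<preceq> \<sim>k"
  using c_le_neg_c k_le_c le_trans[of c "\<sim>c" "\<sim>k"] by simp

lemma W_eq_k_bounds:
  assumes W: "W = k" and W_dual: "\<sim>(k \<^bold>\<or> x) \<^bold>\<and> (k \<^bold>\<or> x) = k"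
  shows "(\<sim>y \<^bold>\<or> k) \<^bold>\<and> y \<preceq> k" "(x \<^bold>\<or> k) \<^bold>\<and> \<sim>x \<preceq> k"
proof -
  have "(\<sim>y \<^bold>\<or> k) \<^bold>\<and> y \<preceq> W"
    using k_le_neg_k neg_y_le_neg_k by (simp add: W_def neg_P P_def le_joinI2 le_meetI1 le_meetI2)
  then show "(\<sim>y \<^bold>\<or> k) \<^bold>\<and> y \<preceq> k"
    using W by simp
  have "(x \<^bold>\<or> k) \<^bold>\<and> \<sim>x \<preceq> \<sim>(k \<^bold>\<or> x) \<^bold>\<and> (k \<^bold>\<or> x)"
    using k_le_neg_k k_le_neg_x
    by (simp add: le_joinI1 le_joinI2 le_meetI1 le_meetI2 le_neg_iff[of x k])
  then show "(x \<^bold>\<or> k) \<^bold>\<and> \<sim>x \<preceq> k"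
    unfolding W_dual .
qed

lemma B10_order_facts:
  "x \<preceq> y" "\<sim>y \<preceq> \<sim>x" "x \<preceq> \<sim>k" "\<sim>y \<preceq> \<sim>k" "x \<preceq> \<sim>t" "\<sim>y \<preceq> \<sim>t"
  "c \<preceq> t" "c \<preceq> \<sim>t" "c \<preceq> \<sim>c" "c \<preceq> \<sim>x" "c \<preceq> y" "c \<preceq> \<sim>k"
  "x \<preceq> \<sim>c" "\<sim>y \<preceq> \<sim>c" "\<sim>t \<preceq> \<sim>c" "k \<preceq> \<sim>x" "k \<preceq> y" "k \<preceq> \<sim>k"
proof -
  have "x \<preceq> \<sim>k" "x \<preceq> \<sim>c"
    using k_le_neg_x c_le_neg_x le_neg_iff[of x k] le_neg_iff[of x c] by simp_all
  moreover have "x \<preceq> \<sim>t" "\<sim>y \<preceq> \<sim>t"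
    by (simp_all add: neg_t)
  moreover have "\<sim>y \<preceq> \<sim>c" "\<sim>t \<preceq> \<sim>c"
    using c_le_y c_le_t by simp_all
  ultimately show "x \<preceq> y" "\<sim>y \<preceq> \<sim>x" "x \<preceq> \<sim>k" "\<sim>y \<preceq> \<sim>k" "x \<preceq> \<sim>t" "\<sim>y \<preceq> \<sim>t"
    "c \<preceq> t" "c \<preceq> \<sim>t" "c \<preceq> \<sim>c" "c \<preceq> \<sim>x" "c \<preceq> y" "c \<preceq> \<sim>k"
    "x \<preceq> \<sim>c" "\<sim>y \<preceq> \<sim>c" "\<sim>t \<preceq> \<sim>c" "k \<preceq> \<sim>x" "k \<preceq> y" "k \<preceq> \<sim>k"
    using x_le_y neg_y_le_neg_x neg_y_le_neg_k k_le_neg_x c_le_t c_le_neg_t c_le_neg_c c_le_neg_x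
      c_le_y c_le_neg_k k_le_y k_le_neg_k
    by simp_all
qed

lemma B10_incomparable_meets:
  assumes "W = k" and "\<sim>(k \<^bold>\<or> x) \<^bold>\<and> (k \<^bold>\<or> x) = k"
  shows "(x \<^bold>\<or> k) \<^bold>\<and> (\<sim>y \<^bold>\<or> k) \<preceq> k" "(x \<^bold>\<or> k) \<^bold>\<and> (t \<^bold>\<or> k) \<preceq> k"
    "(x \<^bold>\<or> k) \<^bold>\<and> (\<sim>x \<^bold>\<and> \<sim>c) \<preceq> k" "(\<sim>y \<^bold>\<or> k) \<^bold>\<and> (t \<^bold>\<or> k) \<preceq> k"
    "(\<sim>y \<^bold>\<or> k) \<^bold>\<and> (y \<^bold>\<and> \<sim>c) \<preceq> k" "y \<^bold>\<and> \<sim>c \<^bold>\<and> (\<sim>x \<^bold>\<and> \<sim>c) \<preceq> t \<^bold>\<or> k"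
    "y \<^bold>\<and> \<sim>c \<^bold>\<and> \<sim>x \<preceq> t \<^bold>\<or> k" "\<sim>x \<^bold>\<and> \<sim>c \<^bold>\<and> y \<preceq> t \<^bold>\<or> k" "\<sim>x \<^bold>\<and> y \<preceq> t \<^bold>\<or> k"
proof -
  note bounds = W_eq_k_bounds[OF assms]
  have "u \<preceq> k" if "u \<preceq> (x \<^bold>\<or> k) \<^bold>\<and> \<sim>x" "u \<in> carrier A" for u
    using that bounds(2) le_trans[of u "(x \<^bold>\<or> k) \<^bold>\<and> \<sim>x" k] by simp
  then show "(x \<^bold>\<or> k) \<^bold>\<and> (\<sim>y \<^bold>\<or> k) \<preceq> k" "(x \<^bold>\<or> k) \<^bold>\<and> (t \<^bold>\<or> k) \<preceq> k"
    "(x \<^bold>\<or> k) \<^bold>\<and> (\<sim>x \<^bold>\<and> \<sim>c) \<preceq> k"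
    using B10_order_facts by (simp_all add: le_meetI1 le_meetI2 t_def)
  have "u \<preceq> k" if "u \<preceq> (\<sim>y \<^bold>\<or> k) \<^bold>\<and> y" "u \<in> carrier A" for u
    using that bounds(1) le_trans[of u "(\<sim>y \<^bold>\<or> k) \<^bold>\<and> y" k] by simp
  then show "(\<sim>y \<^bold>\<or> k) \<^bold>\<and> (t \<^bold>\<or> k) \<preceq> k" "(\<sim>y \<^bold>\<or> k) \<^bold>\<and> (y \<^bold>\<and> \<sim>c) \<preceq> k"
    using B10_order_facts by (simp_all add: le_meetI1 le_meetI2 t_def)
  show "y \<^bold>\<and> \<sim>c \<^bold>\<and> (\<sim>x \<^bold>\<and> \<sim>c) \<preceq> t \<^bold>\<or> k" "y \<^bold>\<and> \<sim>c \<^bold>\<and> \<sim>x \<preceq> t \<^bold>\<or> k"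
    "\<sim>x \<^bold>\<and> \<sim>c \<^bold>\<and> y \<preceq> t \<^bold>\<or> k" "\<sim>x \<^bold>\<and> y \<preceq> t \<^bold>\<or> k"
    by (simp_all add: t_def le_joinI1 le_meetI1 le_meetI2)
qed

lemma B10_separation:
  assumes "W = k" and "\<sim>(k \<^bold>\<or> x) \<^bold>\<and> (k \<^bold>\<or> x) = k" and "c \<noteq> k"
  shows "\<not> c \<preceq> x \<^bold>\<or> k" "\<not> c \<preceq> \<sim>y \<^bold>\<or> k" "\<not> x \<preceq> \<sim>y \<^bold>\<or> k" "\<not> \<sim>y \<preceq> x \<^bold>\<or> k"
    and "\<not> x \<preceq> \<sim>x" "\<not> \<sim>y \<preceq> y" "\<not> \<sim>x \<^bold>\<and> \<sim>k \<preceq> x \<^bold>\<or> k"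
    and "\<not> \<sim>x \<^bold>\<and> \<sim>k \<preceq> \<sim>y \<^bold>\<or> k" "\<not> y \<^bold>\<and> \<sim>k \<preceq> \<sim>y \<^bold>\<or> k"
proof -
  note w = W_eq_k_bounds[OF assms(1,2)]
  have nck: "\<not> c \<preceq> k"
    using \<open>c \<noteq> k\<close> k_le_c le_antisym by auto
  show c_x: "\<not> c \<preceq> x \<^bold>\<or> k"
    using nck w(2) c_le_neg_x le_trans[of c "(x \<^bold>\<or> k) \<^bold>\<and> \<sim>x" k] by auto
  show c_y: "\<not> c \<preceq> \<sim>y \<^bold>\<or> k"
    using nck w(1) c_le_y le_trans[of c "(\<sim>y \<^bold>\<or> k) \<^bold>\<and> y" k] by auto
  show x_y: "\<not> x \<preceq> \<sim>y \<^bold>\<or> k"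
    using c_y c_le_neg_t le_trans[of c "\<sim>t" "\<sim>y \<^bold>\<or> k"] by (auto simp: neg_t)
  show y_x: "\<not> \<sim>y \<preceq> x \<^bold>\<or> k"
    using c_x c_le_neg_t le_trans[of c "\<sim>t" "x \<^bold>\<or> k"] by (auto simp: neg_t)
  show "\<not> x \<preceq> \<sim>x"
    using x_y le_trans[of x "x \<^bold>\<and> \<sim>x" k] by (auto simp: k_def le_joinI2)
  show "\<not> \<sim>y \<preceq> y"
    using y_x le_trans[of "\<sim>y" "y \<^bold>\<and> \<sim>y" k] y_meet_neg_y_le_k by (auto simp: le_joinI2)
  show "\<not> \<sim>x \<^bold>\<and> \<sim>k \<preceq> x \<^bold>\<or> k" "\<not> \<sim>x \<^bold>\<and> \<sim>k \<preceq> \<sim>y \<^bold>\<or> k"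
    using c_x c_y c_le_neg_x c_le_neg_k le_trans[of c "\<sim>x \<^bold>\<and> \<sim>k"] by auto
  show "\<not> y \<^bold>\<and> \<sim>k \<preceq> \<sim>y \<^bold>\<or> k"
    using c_y c_le_y c_le_neg_k le_trans[of c "y \<^bold>\<and> \<sim>k"] by auto
qed

lemma quotient_B10:
  assumes W: "W = k" and W_dual: "\<sim>(k \<^bold>\<or> x) \<^bold>\<and> (k \<^bold>\<or> x) = k" and "c \<noteq> k"
  shows "\<exists>B \<theta>. subalgebra B A \<and> congruence (restrict_alg A B) \<theta> \<and>
    isomorphic (quotient_alg (restrict_alg A B) \<theta>) B10"
proof -
  note facts = B10_order_facts
  define lo where "lo i = (case i of T_0 \<Rightarrow> \<zero> | T_x \<Rightarrow> x | T_y' \<Rightarrow> \<sim>y | T_m \<Rightarrow> c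
    | T_a \<Rightarrow> x \<^bold>\<or> c | T_a' \<Rightarrow> \<sim>y \<^bold>\<or> c | T_x' \<Rightarrow> \<sim>x \<^bold>\<and> \<sim>k | T_y \<Rightarrow> y \<^bold>\<and> \<sim>k
    | T_m' \<Rightarrow> \<sim>t \<^bold>\<and> \<sim>k | T_1 \<Rightarrow> \<sim>k)" for i
  have closed: "lo i \<in> carrier A" for i
    by (cases i) (simp_all add: lo_def)
  have mono: "lo i \<preceq> lo j" if "leq B10 i j" for i j
    using B10.leq_imp_rtrancl[OF that] _ closed
  proof (rule monotone_along_rtrancl)
    show "lo i \<preceq> lo j" if "(i, j) \<in> covers_B10" for i j
      using that facts by (auto simp: covers_B10_def lo_def le_joinI1 le_joinI2 le_meetI1 le_meetI2)
  qed
  have "interval_family A B10 lo"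
  proof (rule interval_family.intro[OF involution_lattice_axioms interval_family_axioms.intro])
    show "involution_lattice B10" "carrier B10 = UNIV" "lo (bot B10) = \<zero>"
      by (simp_all add: B10.involution_lattice lo_def)
    show "lo i \<in> carrier A" for i
      by (rule closed)
    show "lo i \<preceq> \<sim>lo (neg B10 i)" for i
      using facts by (cases i) (simp_all add: lo_def le_joinI1 le_joinI2 le_meetI1 le_meetI2)
    show "lo i \<preceq> lo j" if "leq B10 i j" for i j
      using that by (rule mono)
    show "\<sim>lo (neg B10 i) \<^bold>\<and> \<sim>lo (neg B10 j) \<preceq> \<sim>lo (neg B10 (meet B10 i j))"
      if "\<not> leq B10 i j" "\<not> leq B10 j i" for i j
      using that B10_incomparable_meets[OF W W_dual] W_eq_k_bounds[OF W W_dual]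
      by (cases i; cases j) (simp_all add: lo_def meet_B10_incomparable meet_B10_incomparable_swap
          meet_comm join_comm)
    show "\<not> lo i \<preceq> \<sim>lo (neg B10 j)" if "\<not> leq B10 i j" for i j
      using B10.involution_lattice _ closed mono B10_not_leq_keys[OF that]
    proof (rule separated_if_keys)
      show "\<not> lo p \<preceq> \<sim>lo (neg B10 q)" if "(p, q) \<in> {(T_x, T_y'), (T_x, T_x'), (T_y', T_x),
        (T_y', T_y), (T_m, T_x), (T_m, T_y'), (T_x', T_x), (T_x', T_y'), (T_y, T_y')}" for p q
        using that B10_separation[OF assms] by (auto simp: lo_def)
    qed simp
  qed
  then show ?thesis
    by (rule interval_family.isomorphic_quotient)
qed

lemma quotient_B8s_or_B10:
  assumes "c \<noteq> k"
  shows "\<exists>B \<theta>. subalgebra B A \<and> congruence (restrict_alg A B) \<theta> \<and>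
    (isomorphic (quotient_alg (restrict_alg A B) \<theta>) B8s \<or>
     isomorphic (quotient_alg (restrict_alg A B) \<theta>) B10)"
proof -
  interpret dual: comparable_pair A "\<sim>y" "\<sim>x"
    using x_le_y by unfold_locales simp_all
  have "dual.k = k"
    by (simp add: dual.k_def k_def meet_comm join_comm)
  then have "dual.W = \<sim>(k \<^bold>\<or> x) \<^bold>\<and> (k \<^bold>\<or> x)"
    by (simp add: dual.W_def dual.P_def del: neg_meet neg_join)
  then show ?thesis
    using quotient_B8s dual.quotient_B8s quotient_B10[OF _ _ assms] \<open>dual.k = k\<close> by metis
qed

end

context pseudo_kleene_lattice
begin

lemma SP1_iff_no_B6_B8:
  "SP1 A \<longleftrightarrow> \<not> (\<exists>B. subalgebra B A \<and> isomorphic (restrict_alg A B) B6) \<and>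
    \<not> (\<exists>B. subalgebra B A \<and> isomorphic (restrict_alg A B) B8)"
proof
  assume "SP1 A"
  then show "\<not> (\<exists>B. subalgebra B A \<and> isomorphic (restrict_alg A B) B6) \<and>
    \<not> (\<exists>B. subalgebra B A \<and> isomorphic (restrict_alg A B) B8)"
    using SP1_if_isomorphic_subalgebra[where T = B6] SP1_if_isomorphic_subalgebra[where T = B8]
      B6_not_SP1 B8_not_SP1 by blast
next
  assume none: "\<not> (\<exists>B. subalgebra B A \<and> isomorphic (restrict_alg A B) B6) \<and>
    \<not> (\<exists>B. subalgebra B A \<and> isomorphic (restrict_alg A B) B8)"
  show "SP1 A"
    unfolding SP1_def
  proof (intro ballI impI, elim conjE, rule ccontr)
    fix x y
    assume "x \<in> carrier A" "y \<in> carrier A" "x \<preceq> y" and premise: "\<sim>x \<^bold>\<and> y = x \<^bold>\<and> \<sim>x \<^bold>\<or> y \<^bold>\<and> \<sim>y"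
      and fails: "y \<^bold>\<and> (x \<^bold>\<or> \<sim>x) \<noteq> x \<^bold>\<or> y \<^bold>\<and> \<sim>y"
    then interpret comparable_pair A x y
      by unfold_locales
    interpret SP1_failure A x y
      using premise fails by unfold_locales (simp_all add: k_def a_def b_def)
    show False
      using subalgebra_B6_or_B8 none by blast
  qed
qed

lemma SP2_iff_no_B8s_B10_quotient:
  "SP2 A \<longleftrightarrow> \<not> (\<exists>B \<theta>. subalgebra B A \<and> congruence (restrict_alg A B) \<theta> \<and>
    (isomorphic (quotient_alg (restrict_alg A B) \<theta>) B8s \<or>
     isomorphic (quotient_alg (restrict_alg A B) \<theta>) B10))"
proof
  assume "SP2 A"
  then show "\<not> (\<exists>B \<theta>. subalgebra B A \<and> congruence (restrict_alg A B) \<theta> \<and>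
    (isomorphic (quotient_alg (restrict_alg A B) \<theta>) B8s \<or>
     isomorphic (quotient_alg (restrict_alg A B) \<theta>) B10))"
    using SP2_if_isomorphic_quotient[where T = B8s] SP2_if_isomorphic_quotient[where T = B10]
      B8s_not_SP2 B10_not_SP2 by blast
next
  assume none: "\<not> (\<exists>B \<theta>. subalgebra B A \<and> congruence (restrict_alg A B) \<theta> \<and>
    (isomorphic (quotient_alg (restrict_alg A B) \<theta>) B8s \<or>
     isomorphic (quotient_alg (restrict_alg A B) \<theta>) B10))"
  show "SP2 A"
    unfolding SP2_def
  proof (intro ballI impI, rule ccontr)
    fix x y
    assume "x \<in> carrier A" "y \<in> carrier A" "x \<preceq> y"
      and fails: "x \<^bold>\<and> \<sim>x \<^bold>\<or> y \<^bold>\<and> \<sim>y \<noteq> \<sim>x \<^bold>\<and> y \<^bold>\<and> \<sim>(\<sim>x \<^bold>\<and> y)"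
    then interpret comparable_pair A x y
      by unfold_locales
    show False
      using quotient_B8s_or_B10 fails none by (simp add: k_def c_def t_def)
  qed
qed

end

theorem theorem4p1:
  fixes A :: "'a pkl"
  assumes "pseudo_kleene A"
  shows "super_paraorthomodular A \<longleftrightarrow>
    (\<not> (\<exists>B. subalgebra B A \<and> isomorphic (restrict_alg A B) B6)) \<and>
    (\<not> (\<exists>B. subalgebra B A \<and> isomorphic (restrict_alg A B) B8)) \<and>
    (\<not> (\<exists>B \<theta>. subalgebra B A \<and> congruence (restrict_alg A B) \<theta> \<and>
          (isomorphic (quotient_alg (restrict_alg A B) \<theta>) B8s \<or>
           isomorphic (quotient_alg (restrict_alg A B) \<theta>) B10)))"
proof -
  interpret pseudo_kleene_lattice A
    using assms by (rule pseudo_kleene_lattice_if_pseudo_kleene)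
  show ?thesis
    using super_paraorthomodular_iff SP1_iff_no_B6_B8 SP2_iff_no_B8s_B10_quotient by blast
qed

end
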